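(* Assume the Setting (S). For every $N\ge1$, $h_N>0$ everywhere and $$\partial\bar\partial\log h_N=h_{N-1}-2h_N+h_{N+1}$$ (the Ricci form of the Kähler form $h_N\,dx\wedge dy$ equals the second difference of the Kähler forms $h_{N-1},h_N,h_{N+1}$).
   Context: Setting (S). Let $\mathcal H$ be a separable complex Hilbert space with inner product $\langle\cdot|\cdot\rangle$, antilinear in the first slot. Let $\Lambda\subset\mathbb C$ be a lattice with fundamental domain $D$. Write $z=x+iy$, $\partial=\tfrac12(\partial_x-i\partial_y)$, $\bar\partial=\tfrac12(\partial_x+i\partial_y)$. Let $f:\mathbb C\to\mathcal H$ be holomorphic and satisfy: (i) for every $z\in\mathbb C$ and every $n\ge0$ the vectors $f(z),\partial f(z),\dots,\partial^n f(z)$ are linearly independent; (ii) for every $\lambda\in\Lambda$ there are a nowhere-vanishing holomorphic function $c_\lambda:\mathbb C\to\mathbb C$ and a unitary operator $V_\lambda$ on $\mathcal H$ independent of $z$ such that $f(z+\lambda)=c_\lambda(z)V_\lambda f(z)$ for all $z$. For $n\ge0$ let $P_n(z)$ be the orthogonal projector onto $\mathrm{span}\{f(z),\partial f(z),\dots,\partial^{n-1}f(z)\}$ (with $P_0=0$), let $r_n=\|(1-P_n)\partial^n f\|>0$ and define the "generalized Landau levels" $u_n=(1-P_n)\partial^n f/r_n$. Define $h_N=|\langle u_N|\partial u_{N-1}\rangle|^2$ for $N\ge1$ and $h_0=0$. *)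

theory Defs
  imports "HOL-Analysis.Analysis"
begin

text \<open>A complex Hilbert space is modelled as a real Hilbert space 'h (real inner product,
complete) together with an orthogonal complex structure J (multiplication by i):
J is real-linear, norm preserving, and J (J v) = - v.\<close>

definition complex_structure :: "('h::real_inner \<Rightarrow> 'h) \<Rightarrow> bool" where
  "complex_structure J \<longleftrightarrow> linear J \<and> (\<forall>v. norm (J v) = norm v) \<and> (\<forall>v. J (J v) = - v)"

definition cscale :: "('h::real_vector \<Rightarrow> 'h) \<Rightarrow> complex \<Rightarrow> 'h \<Rightarrow> 'h" where
  "cscale J a v = Re a *\<^sub>R v + Im a *\<^sub>R J v"

text \<open>Complex inner product, antilinear in the first slot.\<close>
definition cinner :: "('h::real_inner \<Rightarrow> 'h) \<Rightarrow> 'h \<Rightarrow> 'h \<Rightarrow> complex" where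
  "cinner J u v = complex_of_real (u \<bullet> v) - \<i> * complex_of_real (u \<bullet> J v)"

definition dx :: "(complex \<Rightarrow> 'a::real_normed_vector) \<Rightarrow> complex \<Rightarrow> 'a" where
  "dx g z = vector_derivative (\<lambda>t::real. g (z + complex_of_real t)) (at 0)"

definition dy :: "(complex \<Rightarrow> 'a::real_normed_vector) \<Rightarrow> complex \<Rightarrow> 'a" where
  "dy g z = vector_derivative (\<lambda>t::real. g (z + \<i> * complex_of_real t)) (at 0)"

definition has_dx :: "(complex \<Rightarrow> 'a::real_normed_vector) \<Rightarrow> complex \<Rightarrow> bool" where
  "has_dx g z \<longleftrightarrow> (\<lambda>t::real. g (z + complex_of_real t)) differentiable (at 0)"

definition has_dy :: "(complex \<Rightarrow> 'a::real_normed_vector) \<Rightarrow> complex \<Rightarrow> bool" where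
  "has_dy g z \<longleftrightarrow> (\<lambda>t::real. g (z + \<i> * complex_of_real t)) differentiable (at 0)"

definition dH :: "('h::real_normed_vector \<Rightarrow> 'h) \<Rightarrow> (complex \<Rightarrow> 'h) \<Rightarrow> complex \<Rightarrow> 'h" where
  "dH J g z = (1/2) *\<^sub>R (dx g z - J (dy g z))"

definition dC :: "(complex \<Rightarrow> complex) \<Rightarrow> complex \<Rightarrow> complex" where
  "dC g z = (dx g z - \<i> * dy g z) / 2"

definition dbarC :: "(complex \<Rightarrow> complex) \<Rightarrow> complex \<Rightarrow> complex" where
  "dbarC g z = (dx g z + \<i> * dy g z) / 2"

definition holoH :: "('h::real_normed_vector \<Rightarrow> 'h) \<Rightarrow> (complex \<Rightarrow> 'h) \<Rightarrow> bool" where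
  "holoH J f \<longleftrightarrow> (\<forall>z. \<exists>v. (f has_derivative (\<lambda>w. cscale J w v)) (at z))"

definition clin_indep :: "('h::real_vector \<Rightarrow> 'h) \<Rightarrow> (nat \<Rightarrow> 'h) \<Rightarrow> nat \<Rightarrow> bool" where
  "clin_indep J v n \<longleftrightarrow>
     (\<forall>c::nat \<Rightarrow> complex. (\<Sum>k\<le>n. cscale J (c k) (v k)) = 0 \<longrightarrow> (\<forall>k\<le>n. c k = 0))"

text \<open>Complex span of v 0, ..., v (n-1) (the zero space for n = 0).\<close>
definition cspan_upto :: "('h::real_vector \<Rightarrow> 'h) \<Rightarrow> (nat \<Rightarrow> 'h) \<Rightarrow> nat \<Rightarrow> 'h set" where
  "cspan_upto J v n = {(\<Sum>k<n. cscale J (c k) (v k)) | c. True}"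

text \<open>(1 - P) x, where P is the orthogonal projector onto the (closed) subspace S.\<close>
definition perp_part :: "('h::real_inner \<Rightarrow> 'h) \<Rightarrow> 'h set \<Rightarrow> 'h \<Rightarrow> 'h" where
  "perp_part J S x = (THE w. x - w \<in> S \<and> (\<forall>s\<in>S. cinner J s w = 0))"

definition dn :: "('h::real_normed_vector \<Rightarrow> 'h) \<Rightarrow> (complex \<Rightarrow> 'h) \<Rightarrow> nat \<Rightarrow> complex \<Rightarrow> 'h" where
  "dn J f n = ((dH J) ^^ n) f"

definition rn :: "('h::real_inner \<Rightarrow> 'h) \<Rightarrow> (complex \<Rightarrow> 'h) \<Rightarrow> nat \<Rightarrow> complex \<Rightarrow> real" where
  "rn J f n z = norm (perp_part J (cspan_upto J (\<lambda>k. dn J f k z) n) (dn J f n z))"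

definition un :: "('h::real_inner \<Rightarrow> 'h) \<Rightarrow> (complex \<Rightarrow> 'h) \<Rightarrow> nat \<Rightarrow> complex \<Rightarrow> 'h" where
  "un J f n z = (1 / rn J f n z) *\<^sub>R perp_part J (cspan_upto J (\<lambda>k. dn J f k z) n) (dn J f n z)"

definition hN :: "('h::real_inner \<Rightarrow> 'h) \<Rightarrow> (complex \<Rightarrow> 'h) \<Rightarrow> nat \<Rightarrow> complex \<Rightarrow> real" where
  "hN J f N z = (if N = 0 then 0
      else (cmod (cinner J (un J f N z) (dH J (un J f (N - 1)) z)))\<^sup>2)"

definition lattice :: "complex \<Rightarrow> complex \<Rightarrow> complex set" where
  "lattice \<omega>1 \<omega>2 = {of_int m * \<omega>1 + of_int n * \<omega>2 | m n. True}"

definition unitary :: "('h::real_inner \<Rightarrow> 'h) \<Rightarrow> ('h \<Rightarrow> 'h) \<Rightarrow> bool" where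
  "unitary J V \<longleftrightarrow> linear V \<and> (\<forall>v. V (J v) = J (V v)) \<and> (\<forall>v. norm (V v) = norm v) \<and> surj V"

end

theory Submission
  imports Defs "HOL-Complex_Analysis.Complex_Analysis"
begin

text \<open>Let v_n = r_n u_n be the Gram--Schmidt orthogonalisation of the derivatives d^n f and
  R_n = r_n^2. Differentiating the relations < d^j f, v_n > = 0 (j < n) shows
  dbar v_n = - (R_n / R_(n-1)) v_(n-1) and d v_n = v_(n+1) + beta_n v_n; in particular
  h_N = R_N / R_(N-1). Hence dbar log R_n = < d v_n, v_n > / R_n, and applying d, using that
  d and dbar commute, gives d dbar log R_n = h_(n+1) - h_n. The claim is the difference of
  these identities for n = N and n = N - 1.

  Two analytic facts are proved on the way: the complex derivative of a holomorphic map into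
  the Hilbert space is again holomorphic (its difference quotients are Cauchy, by Cauchy's
  estimates for the scalar functions < x, f >), and mixed partial derivatives of a twice
  differentiable function commute.\<close>

locale complex_hilbert =
  fixes J :: "'h::{real_inner, complete_space} \<Rightarrow> 'h"
  assumes complex_structure: "complex_structure J"
begin

lemma linear_J: "linear J"
  using complex_structure unfolding complex_structure_def by auto

lemma norm_J [simp]: "norm (J v) = norm v"
  using complex_structure unfolding complex_structure_def by auto

lemma J_J [simp]: "J (J v) = - v"
  using complex_structure unfolding complex_structure_def by auto

lemma J_add [simp]: "J (x + y) = J x + J y"
  using linear_J by (simp add: linear_add)

lemma J_scaleR [simp]: "J (c *\<^sub>R x) = c *\<^sub>R J x"
  using linear_J by (simp add: linear_scale)

lemma J_zero [simp]: "J 0 = 0"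
  using linear_J by (simp add: linear_0)

lemma J_minus [simp]: "J (- x) = - J x"
  using linear_J by (simp add: linear_neg)

lemma J_diff [simp]: "J (x - y) = J x - J y"
  using linear_J by (simp add: linear_diff)

lemma bounded_linear_J: "bounded_linear J"
proof -
  interpret linear J by (rule linear_J)
  show ?thesis by unfold_locales (rule exI[of _ 1], simp)
qed

lemma inner_J_J [simp]: "inner (J x) (J y) = inner x y"
proof -
  have "inner (J x + J y) (J x + J y) = inner (x + y) (x + y)"
    using norm_J[of "x + y"] by (simp only: J_add power2_norm_eq_inner[symmetric])
  moreover have "inner (J x) (J x) = inner x x" "inner (J y) (J y) = inner y y"
    using norm_J[of x] norm_J[of y] by (simp_all add: power2_norm_eq_inner[symmetric])
  ultimately show ?thesis by (simp add: inner_add inner_commute)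
qed

lemma inner_J_left: "inner (J x) y = - inner x (J y)"
  using inner_J_J[of "J x" y] by simp

lemma inner_J_swap: "inner y (J x) = - inner x (J y)"
  by (metis inner_J_left inner_commute)

lemma inner_J_self [simp]: "inner x (J x) = 0" "inner (J x) x = 0"
  using inner_J_left[of x x] by (simp_all add: inner_commute)

lemma cscale_simps [simp]:
  "cscale J a (x + y) = cscale J a x + cscale J a y"
  "cscale J (a + b) x = cscale J a x + cscale J b x"
  "cscale J 0 x = 0"
  "cscale J a 0 = 0"
  "cscale J 1 x = x"
  "cscale J (complex_of_real r) x = r *\<^sub>R x"
  "cscale J \<i> x = J x"
  "cscale J (- a) x = - cscale J a x"
  "cscale J a (- x) = - cscale J a x"
  "cscale J (a - b) x = cscale J a x - cscale J b x"
  "cscale J a (x - y) = cscale J a x - cscale J a y"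
  "cscale J a (r *\<^sub>R x) = r *\<^sub>R cscale J a x"
  "J (cscale J a x) = cscale J a (J x)"
  unfolding cscale_def by (auto simp: algebra_simps scaleR_add_left)

lemma cscale_mult: "cscale J a (cscale J b x) = cscale J (a * b) x"
  unfolding cscale_def by (simp add: algebra_simps scaleR_add_left)

lemma cscale_half: "cscale J (a / 2) x = (1/2) *\<^sub>R cscale J a x"
  unfolding cscale_def by (simp add: algebra_simps)

lemma cscale_i_mult: "cscale J (\<i> * a) x = J (cscale J a x)"
  unfolding cscale_def by (simp add: algebra_simps)

lemma cscale_sum_right: "cscale J a (sum g A) = (\<Sum>i\<in>A. cscale J a (g i))"
  by (induction A rule: infinite_finite_induct) auto

lemma norm_cscale: "norm (cscale J a x) = cmod a * norm x"
proof -
  have "(norm (cscale J a x))\<^sup>2 = (Re a)\<^sup>2 * (norm x)\<^sup>2 + (Im a)\<^sup>2 * (norm x)\<^sup>2"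
    unfolding cscale_def power2_norm_eq_inner
    by (simp add: inner_add inner_commute algebra_simps power2_eq_square)
  also have "\<dots> = (cmod a * norm x)\<^sup>2"
    by (simp add: cmod_def power_mult_distrib algebra_simps)
  finally show ?thesis by (simp add: power2_eq_iff_nonneg)
qed

lemma cinner_simps [simp]:
  "cinner J x (y + z) = cinner J x y + cinner J x z"
  "cinner J (x + y) z = cinner J x z + cinner J y z"
  "cinner J x (y - z) = cinner J x y - cinner J x z"
  "cinner J (x - y) z = cinner J x z - cinner J y z"
  "cinner J x (- y) = - cinner J x y"
  "cinner J (- x) y = - cinner J x y"
  "cinner J 0 y = 0"
  "cinner J x 0 = 0"
  "cinner J x (r *\<^sub>R y) = complex_of_real r * cinner J x y"
  "cinner J (r *\<^sub>R x) y = complex_of_real r * cinner J x y"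
  unfolding cinner_def by (auto simp: inner_add inner_diff algebra_simps)

lemma cinner_J_right [simp]: "cinner J x (J y) = \<i> * cinner J x y"
  unfolding cinner_def by (simp add: algebra_simps)

lemma cinner_J_left [simp]: "cinner J (J x) y = - \<i> * cinner J x y"
  unfolding cinner_def by (simp add: algebra_simps inner_J_left)

lemma cinner_cscale_right [simp]: "cinner J x (cscale J a y) = a * cinner J x y"
  unfolding cscale_def cinner_def by (simp add: algebra_simps complex_eq_iff)

lemma cinner_cscale_left [simp]: "cinner J (cscale J a x) y = cnj a * cinner J x y"
  using inner_J_swap[of y x] unfolding cscale_def cinner_def
  by (simp add: algebra_simps complex_eq_iff inner_J_left)

lemma cinner_commute: "cinner J y x = cnj (cinner J x y)"
  using inner_J_swap[of y x] unfolding cinner_def by (simp add: complex_eq_iff inner_commute)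

lemma cinner_self: "cinner J x x = complex_of_real ((norm x)\<^sup>2)"
  unfolding cinner_def by (simp add: power2_norm_eq_inner)

lemma cinner_self_eq_0 [simp]: "cinner J x x = 0 \<longleftrightarrow> x = 0"
  by (simp add: cinner_self)

lemma cinner_sum_right: "cinner J x (sum g A) = (\<Sum>i\<in>A. cinner J x (g i))"
  by (induction A rule: infinite_finite_induct) auto

lemma cinner_sum_left: "cinner J (sum g A) x = (\<Sum>i\<in>A. cinner J (g i) x)"
  by (induction A rule: infinite_finite_induct) auto

lemma norm_cinner_le: "cmod (cinner J x y) \<le> norm x * norm y"
proof (cases "cinner J x y = 0")
  case False
  define c where "c = cinner J x y / complex_of_real (cmod (cinner J x y))"
  have "cnj c * cinner J x y = complex_of_real (cmod (cinner J x y))"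
    using False unfolding c_def
    by (simp add: field_simps complex_norm_square[symmetric] power2_eq_square)
  then have "cmod (cinner J x y) = inner (cscale J c x) y"
    using arg_cong[OF cinner_cscale_left[of c x y], of Re] by (simp add: cinner_def)
  also have "\<dots> \<le> norm (cscale J c x) * norm y"
    by (rule norm_cauchy_schwarz)
  also have "\<dots> = norm x * norm y"
    using False by (simp add: norm_cscale c_def norm_divide)
  finally show ?thesis .
qed simp

lemma bounded_bilinear_cinner: "bounded_bilinear (cinner J)"
  by unfold_locales (auto intro!: exI[of _ 1] simp: norm_cinner_le scaleR_conv_of_real)

lemma bounded_bilinear_cscale: "bounded_bilinear (cscale J)"
proof -
  have "cscale J (complex_of_real r * a) x = r *\<^sub>R cscale J a x" for r a x
    unfolding cscale_def by (simp add: algebra_simps)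
  then show ?thesis
    by unfold_locales (auto intro!: exI[of _ 1] simp: norm_cscale scaleR_conv_of_real)
qed

end


abbreviation fderiv :: "(complex \<Rightarrow> 'a::real_normed_vector) \<Rightarrow> complex \<Rightarrow> complex \<Rightarrow> 'a" where
  "fderiv g z \<equiv> frechet_derivative g (at z)"

lemma fderiv_works: "g differentiable at z \<Longrightarrow> (g has_derivative fderiv g z) (at z)"
  using frechet_derivative_works by blast

lemma fderiv_eq: "(g has_derivative D) (at z) \<Longrightarrow> fderiv g z = D"
  using frechet_derivative_at by metis

lemma has_vector_derivative_along_line:
  assumes "(g has_derivative D) (at z)"
  shows "((\<lambda>t::real. g (z + complex_of_real t * u)) has_vector_derivative D u) (at 0)"
proof -
  interpret bounded_linear D
    using assms by (rule has_derivative_bounded_linear)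
  have "((\<lambda>t::real. z + complex_of_real t * u) has_derivative (\<lambda>t. complex_of_real t * u)) (at 0)"
    by (auto intro!: derivative_eq_intros)
  from has_derivative_compose[OF this] assms
  have "((\<lambda>t. g (z + complex_of_real t * u)) has_derivative (\<lambda>t. D (t *\<^sub>R u))) (at 0)"
    by (simp add: scaleR_conv_of_real)
  then show ?thesis
    unfolding has_vector_derivative_def by (simp add: scale)
qed

lemma dx_has_derivative: "(g has_derivative D) (at z) \<Longrightarrow> dx g z = D 1"
  unfolding dx_def using has_vector_derivative_along_line[of g D z 1]
  by (simp add: vector_derivative_at)

lemma dy_has_derivative: "(g has_derivative D) (at z) \<Longrightarrow> dy g z = D \<i>"
  unfolding dy_def using has_vector_derivative_along_line[of g D z \<i>]
  by (simp add: vector_derivative_at mult.commute)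

lemma has_dx_differentiable: "g differentiable at z \<Longrightarrow> has_dx g z"
  unfolding has_dx_def using has_vector_derivative_along_line[of g "fderiv g z" z 1] fderiv_works
  by (auto intro: differentiableI_vector)

lemma has_dy_differentiable: "g differentiable at z \<Longrightarrow> has_dy g z"
  unfolding has_dy_def using has_vector_derivative_along_line[of g "fderiv g z" z \<i>] fderiv_works
  by (auto intro: differentiableI_vector simp: mult.commute)

lemma dx_fderiv: "g differentiable at z \<Longrightarrow> dx g z = fderiv g z 1"
  using fderiv_works dx_has_derivative by blast

lemma dy_fderiv: "g differentiable at z \<Longrightarrow> dy g z = fderiv g z \<i>"
  using fderiv_works dy_has_derivative by blast

lemma dx_bounded_linear:
  "bounded_linear L \<Longrightarrow> g differentiable at z \<Longrightarrow> dx (\<lambda>w. L (g w)) z = L (dx g z)"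
  using dx_has_derivative[OF bounded_linear.has_derivative[OF _ fderiv_works]] dx_fderiv by metis

lemma dy_bounded_linear:
  "bounded_linear L \<Longrightarrow> g differentiable at z \<Longrightarrow> dy (\<lambda>w. L (g w)) z = L (dy g z)"
  using dy_has_derivative[OF bounded_linear.has_derivative[OF _ fderiv_works]] dy_fderiv by metis

text \<open>Weaker than C^2: no continuity of the second derivative is assumed.\<close>

definition twice_differentiable :: "(complex \<Rightarrow> 'a::real_normed_vector) \<Rightarrow> bool" where
  "twice_differentiable g \<longleftrightarrow>
     (\<forall>z. g differentiable at z) \<and> (\<forall>u z. (\<lambda>w. fderiv g w u) differentiable at z)"

lemma twice_differentiable_imp_differentiable:
  "twice_differentiable g \<Longrightarrow> g differentiable at z"
  unfolding twice_differentiable_def by blast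

lemma twice_differentiable_fderiv:
  "twice_differentiable g \<Longrightarrow> (\<lambda>w. fderiv g w u) differentiable at z"
  unfolding twice_differentiable_def by blast

lemma dx_twice_differentiable: "twice_differentiable g \<Longrightarrow> dx g = (\<lambda>w. fderiv g w 1)"
  by (rule ext) (simp add: dx_fderiv twice_differentiable_imp_differentiable)

lemma dy_twice_differentiable: "twice_differentiable g \<Longrightarrow> dy g = (\<lambda>w. fderiv g w \<i>)"
  by (rule ext) (simp add: dy_fderiv twice_differentiable_imp_differentiable)

lemma differentiable_dx: "twice_differentiable g \<Longrightarrow> dx g differentiable at z"
  using twice_differentiable_fderiv[of g 1 z] by (simp add: dx_twice_differentiable)

lemma differentiable_dy: "twice_differentiable g \<Longrightarrow> dy g differentiable at z"
  using twice_differentiable_fderiv[of g \<i> z] by (simp add: dy_twice_differentiable)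

lemma twice_differentiableI:
  assumes "\<And>z. (g has_derivative D z) (at z)"
    and "\<And>u z. (\<lambda>w. D w u) differentiable at z"
  shows "twice_differentiable g"
proof -
  have "fderiv g z = D z" for z
    using assms(1) by (rule fderiv_eq)
  then show ?thesis
    unfolding twice_differentiable_def using assms differentiableI by fastforce
qed

lemma twice_differentiable_const [simp]: "twice_differentiable (\<lambda>z. c)"
  by (rule twice_differentiableI[where D="\<lambda>z u. 0"]) auto

lemma twice_differentiable_bounded_linear:
  assumes "bounded_linear L" "twice_differentiable g"
  shows "twice_differentiable (\<lambda>z. L (g z))"
proof (rule twice_differentiableI[where D="\<lambda>z u. L (fderiv g z u)"])
  show "((\<lambda>z. L (g z)) has_derivative (\<lambda>u. L (fderiv g z u))) (at z)" for z
    using bounded_linear.has_derivative[OF assms(1)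
        fderiv_works[OF twice_differentiable_imp_differentiable[OF assms(2)]]] .
  show "(\<lambda>w. L (fderiv g w u)) differentiable at z" for u z
    using bounded_linear.has_derivative[OF assms(1)] twice_differentiable_fderiv[OF assms(2)]
    by (metis differentiable_def)
qed

lemma differentiable_bounded_bilinear:
  fixes z :: complex
  assumes "bounded_bilinear pr" "f differentiable at z" "g differentiable at z"
  shows "(\<lambda>w. pr (f w) (g w)) differentiable at z"
  using bounded_bilinear.FDERIV[OF assms(1) fderiv_works[OF assms(2)] fderiv_works[OF assms(3)]]
  by (rule differentiableI)

lemma fderiv_bounded_bilinear:
  fixes z :: complex
  assumes "bounded_bilinear pr" "f differentiable at z" "g differentiable at z"
  shows "fderiv (\<lambda>w. pr (f w) (g w)) z u = pr (f z) (fderiv g z u) + pr (fderiv f z u) (g z)"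
  using fderiv_eq[OF bounded_bilinear.FDERIV[OF assms(1) fderiv_works[OF assms(2)]
        fderiv_works[OF assms(3)]]]
  by simp

lemma twice_differentiable_bounded_bilinear:
  assumes "bounded_bilinear pr" "twice_differentiable f" "twice_differentiable g"
  shows "twice_differentiable (\<lambda>z. pr (f z) (g z))"
proof (rule twice_differentiableI
    [where D="\<lambda>z u. pr (f z) (fderiv g z u) + pr (fderiv f z u) (g z)"])
  show "((\<lambda>z. pr (f z) (g z)) has_derivative
          (\<lambda>u. pr (f z) (fderiv g z u) + pr (fderiv f z u) (g z))) (at z)" for z
    using bounded_bilinear.FDERIV[OF assms(1)
        fderiv_works[OF twice_differentiable_imp_differentiable[OF assms(2)]]
        fderiv_works[OF twice_differentiable_imp_differentiable[OF assms(3)]]] .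
  show "(\<lambda>w. pr (f w) (fderiv g w u) + pr (fderiv f w u) (g w)) differentiable at z" for u z
    by (intro differentiable_add differentiable_bounded_bilinear[OF assms(1)]
        twice_differentiable_imp_differentiable twice_differentiable_fderiv assms)
qed

lemma twice_differentiable_add [intro]:
  assumes "twice_differentiable f" "twice_differentiable g"
  shows "twice_differentiable (\<lambda>z. f z + g z)"
proof (rule twice_differentiableI[where D="\<lambda>z u. fderiv f z u + fderiv g z u"])
  show "((\<lambda>z. f z + g z) has_derivative (\<lambda>u. fderiv f z u + fderiv g z u)) (at z)" for z
    by (intro has_derivative_add fderiv_works twice_differentiable_imp_differentiable assms)
  show "(\<lambda>w. fderiv f w u + fderiv g w u) differentiable at z" for u z
    by (intro differentiable_add twice_differentiable_fderiv assms)
qed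

lemma twice_differentiable_diff [intro]:
  assumes "twice_differentiable f" "twice_differentiable g"
  shows "twice_differentiable (\<lambda>z. f z - g z)"
  using twice_differentiable_add[OF assms(1)
      twice_differentiable_bounded_linear[OF bounded_linear_minus[OF bounded_linear_ident] assms(2)]]
  by simp

lemma twice_differentiable_sum [intro]:
  "(\<And>i. i \<in> A \<Longrightarrow> twice_differentiable (g i)) \<Longrightarrow> twice_differentiable (\<lambda>z. \<Sum>i\<in>A. g i z)"
  by (induction A rule: infinite_finite_induct) auto

lemma twice_differentiable_compose_real:
  fixes R :: "complex \<Rightarrow> real"
  assumes "twice_differentiable R" "open A" "\<And>z. R z \<in> A"
    and "\<And>x. x \<in> A \<Longrightarrow> (\<phi> has_real_derivative \<phi>' x) (at x)"
    and "\<And>x. x \<in> A \<Longrightarrow> \<phi>' differentiable at x"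
  shows "twice_differentiable (\<lambda>z. \<phi> (R z))"
proof (rule twice_differentiableI[where D="\<lambda>z u. \<phi>' (R z) * fderiv R z u"])
  fix z
  have "(\<phi> has_derivative (\<lambda>h. h * \<phi>' (R z))) (at (R z))"
    using assms(4)[OF assms(3)[of z]]
    by (simp add: has_field_derivative_def mult.commute[of _ "\<phi>' (R z)"])
  from has_derivative_compose[OF fderiv_works[OF twice_differentiable_imp_differentiable[OF assms(1)]] this]
  show "((\<lambda>z. \<phi> (R z)) has_derivative (\<lambda>u. \<phi>' (R z) * fderiv R z u)) (at z)"
    by (simp add: mult.commute)
  fix u
  obtain D where "(\<phi>' has_derivative D) (at (R z))"
    using assms(3,5) unfolding differentiable_def by blast
  from has_derivative_compose[OF fderiv_works[OF twice_differentiable_imp_differentiable[OF assms(1)]] this]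
  have "(\<lambda>w. \<phi>' (R w)) differentiable at z"
    by (rule differentiableI)
  then show "(\<lambda>w. \<phi>' (R w) * fderiv R w u) differentiable at z"
    by (intro differentiable_mult twice_differentiable_fderiv assms(1))
qed

lemma twice_differentiable_inverse:
  fixes r :: "complex \<Rightarrow> real"
  assumes "twice_differentiable r" "\<And>z. r z > 0"
  shows "twice_differentiable (\<lambda>z. inverse (r z))"
proof (rule twice_differentiable_compose_real[OF assms(1), where A="{0<..}"
      and \<phi>'="\<lambda>x. - (inverse x ^ 2)"])
  fix x :: real assume "x \<in> {0<..}"
  then show "(inverse has_real_derivative - (inverse x ^ 2)) (at x)"
    using DERIV_inverse[of x] by (simp add: power2_eq_square)
  show "(\<lambda>x. - (inverse x ^ 2)) differentiable at x"
    using \<open>x \<in> {0<..}\<close> by (intro derivative_intros) auto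
qed (use assms(2) in auto)

lemma twice_differentiable_ln:
  fixes r :: "complex \<Rightarrow> real"
  assumes "twice_differentiable r" "\<And>z. r z > 0"
  shows "twice_differentiable (\<lambda>z. ln (r z))"
proof (rule twice_differentiable_compose_real[OF assms(1), where A="{0<..}" and \<phi>'=inverse])
  fix x :: real assume "x \<in> {0<..}"
  then show "(ln has_real_derivative inverse x) (at x)"
    by (simp add: DERIV_ln)
  show "inverse differentiable at x"
    using \<open>x \<in> {0<..}\<close> by (intro derivative_intros) auto
qed (use assms(2) in auto)


subsection \<open>Symmetry of mixed partial derivatives\<close>

lemma has_real_derivative_along_line:
  fixes F :: "complex \<Rightarrow> real"
  assumes "F differentiable at (a + complex_of_real s * u)"
  shows "((\<lambda>s. F (a + complex_of_real s * u)) has_real_derivative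
           fderiv F (a + complex_of_real s * u) u) (at s)"
proof -
  let ?q = "a + complex_of_real s * u"
  interpret bounded_linear "fderiv F ?q"
    using fderiv_works[OF assms] by (rule has_derivative_bounded_linear)
  have "((\<lambda>s::real. a + complex_of_real s * u) has_derivative (\<lambda>h. complex_of_real h * u)) (at s)"
    by (auto intro!: derivative_eq_intros)
  from has_derivative_compose[OF this fderiv_works[OF assms]]
  have "((\<lambda>s. F (a + complex_of_real s * u)) has_derivative (\<lambda>h. fderiv F ?q (h *\<^sub>R u))) (at s)"
    by (simp add: scaleR_conv_of_real)
  moreover have "(\<lambda>h. fderiv F ?q (h *\<^sub>R u)) = (*) (fderiv F ?q u)"
    by (auto simp: scale)
  ultimately show ?thesis
    unfolding has_field_derivative_def by simp
qed

definition second_difference :: "(complex \<Rightarrow> real) \<Rightarrow> complex \<Rightarrow> complex \<Rightarrow> complex \<Rightarrow> real \<Rightarrow> real" where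
  "second_difference F p u w t =
     F (p + complex_of_real t * u + complex_of_real t * w) - F (p + complex_of_real t * u)
       - F (p + complex_of_real t * w) + F p"

lemma second_difference_commute: "second_difference F p u w t = second_difference F p w u t"
  unfolding second_difference_def by (simp add: algebra_simps)

lemma second_difference_mean_value:
  fixes F :: "complex \<Rightarrow> real"
  assumes "\<And>z. F differentiable at z" "0 < t"
  obtains \<xi> where "0 < \<xi>" "\<xi> < t"
    "second_difference F p u w t =
       t * (fderiv F (p + complex_of_real t * w + complex_of_real \<xi> * u) u
            - fderiv F (p + complex_of_real \<xi> * u) u)"
proof -
  define \<phi> where "\<phi> s = F (p + complex_of_real t * w + complex_of_real s * u)
    - F (p + complex_of_real s * u)" for s
  have "DERIV \<phi> s :> fderiv F (p + complex_of_real t * w + complex_of_real s * u) u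
                     - fderiv F (p + complex_of_real s * u) u" for s
    unfolding \<phi>_def by (intro DERIV_diff has_real_derivative_along_line assms(1))
  from MVT2[OF assms(2) this] obtain \<xi> where "0 < \<xi>" "\<xi> < t"
    "\<phi> t - \<phi> 0 = (t - 0) * (fderiv F (p + complex_of_real t * w + complex_of_real \<xi> * u) u
                             - fderiv F (p + complex_of_real \<xi> * u) u)"
    by blast
  then show ?thesis
    using that unfolding \<phi>_def second_difference_def by (simp add: algebra_simps)
qed

lemma second_difference_estimate:
  fixes F :: "complex \<Rightarrow> real"
  assumes dF: "\<And>z. F differentiable at z" and D: "bounded_linear D" and t: "0 < t"
    and close: "\<And>y. norm (y - p) \<le> t * (cmod u + cmod w) \<Longrightarrow>
                  \<bar>fderiv F y u - fderiv F p u - D (y - p)\<bar> \<le> e * t"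
  shows "\<bar>second_difference F p u w t / t\<^sup>2 - D w\<bar> \<le> 2 * e"
proof -
  interpret D: bounded_linear D by (rule D)
  obtain \<xi> where \<xi>: "0 < \<xi>" "\<xi> < t" and mvt: "second_difference F p u w t =
      t * (fderiv F (p + complex_of_real t * w + complex_of_real \<xi> * u) u
           - fderiv F (p + complex_of_real \<xi> * u) u)"
    using second_difference_mean_value[OF dF t] by blast
  define y1 where "y1 = p + complex_of_real t * w + complex_of_real \<xi> * u"
  define y2 where "y2 = p + complex_of_real \<xi> * u"
  have "norm (y1 - p) \<le> t * (cmod u + cmod w)"
    unfolding y1_def using \<xi> t
    by (auto simp: norm_mult algebra_simps intro!: order_trans[OF norm_triangle_ineq] add_mono mult_right_mono)
  moreover have "norm (y2 - p) \<le> t * (cmod u + cmod w)"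
    unfolding y2_def using \<xi> t by (auto simp: norm_mult algebra_simps intro!: mult_mono add_increasing2)
  moreover have "D (y1 - p) - D (y2 - p) = t * D w"
    using D.diff[of "y1 - p" "y2 - p"] D.scale[of t w]
    unfolding y1_def y2_def by (simp add: scaleR_conv_of_real)
  ultimately have bound: "\<bar>(fderiv F y1 u - fderiv F y2 u) - t * D w\<bar> \<le> 2 * e * t"
    using close[of y1] close[of y2] by linarith
  have "second_difference F p u w t / t\<^sup>2 - D w = ((fderiv F y1 u - fderiv F y2 u) - t * D w) / t"
    using t unfolding mvt y1_def y2_def by (simp add: power2_eq_square field_simps)
  then show ?thesis
    using bound t by (simp add: abs_divide divide_le_eq)
qed

text \<open>The rescaled second difference tends to the second derivative in directions u, w;
  being symmetric in u and w, it forces the mixed partials to agree.\<close>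

lemma second_difference_tendsto:
  fixes F :: "complex \<Rightarrow> real"
  assumes dF: "\<And>z. F differentiable at z"
    and D: "((\<lambda>q. fderiv F q u) has_derivative D) (at p)"
  shows "((\<lambda>t. second_difference F p u w t / t\<^sup>2) \<longlongrightarrow> D w) (at_right 0)"
proof (rule tendsto_iff[THEN iffD2], intro allI impI)
  fix e :: real assume e: "e > 0"
  define K where "K = cmod u + cmod w + 1"
  have K: "K > 0" unfolding K_def by (simp add: add_nonneg_pos)
  from D[unfolded has_derivative_at_alt] obtain d where d: "d > 0"
    and dd: "\<And>y. norm (y - p) < d \<Longrightarrow>
              norm (fderiv F y u - fderiv F p u - D (y - p)) \<le> (e / (4*K)) * norm (y - p)"
    using e K by (metis divide_pos_pos mult_pos_pos zero_less_numeral)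
  show "\<forall>\<^sub>F t in at_right 0. dist (second_difference F p u w t / t\<^sup>2) (D w) < e"
    unfolding eventually_at_right_field
  proof (intro exI[of _ "d / K"] conjI allI impI)
    show "0 < d / K" using d K by simp
    fix t :: real assume t: "0 < t" "t < d / K"
    have close: "\<bar>fderiv F y u - fderiv F p u - D (y - p)\<bar> \<le> e / 4 * t"
      if y: "norm (y - p) \<le> t * (cmod u + cmod w)" for y
    proof -
      have yK: "norm (y - p) \<le> t * K"
        using y t unfolding K_def by (simp add: algebra_simps)
      moreover have "t * K < d"
        using t K by (simp add: field_simps)
      ultimately have "\<bar>fderiv F y u - fderiv F p u - D (y - p)\<bar> \<le> (e / (4*K)) * norm (y - p)"
        using dd[of y] by simp
      also have "\<dots> \<le> (e / (4*K)) * (t * K)"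
        using yK e K by (intro mult_left_mono) auto
      finally have "\<bar>fderiv F y u - fderiv F p u - D (y - p)\<bar> \<le> (e / (4*K)) * (t * K)" .
      then show ?thesis using K by simp
    qed
    have "\<bar>second_difference F p u w t / t\<^sup>2 - D w\<bar> \<le> 2 * (e / 4)"
      by (rule second_difference_estimate[OF dF has_derivative_bounded_linear[OF D] t(1) close])
    then show "dist (second_difference F p u w t / t\<^sup>2) (D w) < e"
      using e by (simp add: dist_real_def)
  qed
qed

lemma dy_dx_commute_real:
  fixes F :: "complex \<Rightarrow> real"
  assumes "twice_differentiable F"
  shows "dy (dx F) p = dx (dy F) p"
proof -
  have dF: "\<And>z. F differentiable at z"
    using assms by (rule twice_differentiable_imp_differentiable)
  have "((\<lambda>q. fderiv F q 1) has_derivative fderiv (dx F) p) (at p)"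
    using fderiv_works[OF differentiable_dx[OF assms]] dx_twice_differentiable[OF assms] by simp
  from second_difference_tendsto[OF dF this, of \<i>]
  have "((\<lambda>t. second_difference F p \<i> 1 t / t\<^sup>2) \<longlongrightarrow> fderiv (dx F) p \<i>) (at_right 0)"
    by (simp add: second_difference_commute)
  moreover have "((\<lambda>q. fderiv F q \<i>) has_derivative fderiv (dy F) p) (at p)"
    using fderiv_works[OF differentiable_dy[OF assms]] dy_twice_differentiable[OF assms] by simp
  from second_difference_tendsto[OF dF this, of 1]
  have "((\<lambda>t. second_difference F p \<i> 1 t / t\<^sup>2) \<longlongrightarrow> fderiv (dy F) p 1) (at_right 0)" .
  ultimately have "fderiv (dx F) p \<i> = fderiv (dy F) p 1"
    using tendsto_unique[OF trivial_limit_at_right_real] by blast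
  then show ?thesis
    using dy_fderiv[OF differentiable_dx[OF assms]] dx_fderiv[OF differentiable_dy[OF assms]] by simp
qed

lemma dy_dx_commute:
  fixes g :: "complex \<Rightarrow> 'a::real_inner"
  assumes "twice_differentiable g"
  shows "dy (dx g) p = dx (dy g) p"
proof -
  have "inner a (dy (dx g) p) = inner a (dx (dy g) p)" for a
  proof -
    have bl: "bounded_linear (inner a)" by (rule bounded_linear_inner_right)
    have "dx (\<lambda>z. inner a (g z)) = (\<lambda>z. inner a (dx g z))"
      "dy (\<lambda>z. inner a (g z)) = (\<lambda>z. inner a (dy g z))"
      using dx_bounded_linear[OF bl] dy_bounded_linear[OF bl]
        twice_differentiable_imp_differentiable[OF assms] by auto
    then show ?thesis
      using dy_dx_commute_real[OF twice_differentiable_bounded_linear[OF bl assms], of p]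
        dy_bounded_linear[OF bl differentiable_dx[OF assms]]
        dx_bounded_linear[OF bl differentiable_dy[OF assms]] by simp
  qed
  from this[of "dy (dx g) p - dx (dy g) p"]
  have "inner (dy (dx g) p - dx (dy g) p) (dy (dx g) p - dx (dy g) p) = 0"
    by (simp add: inner_diff_right)
  then show ?thesis by simp
qed


subsection \<open>Wirtinger derivatives\<close>

definition dbarH :: "('h::real_normed_vector \<Rightarrow> 'h) \<Rightarrow> (complex \<Rightarrow> 'h) \<Rightarrow> complex \<Rightarrow> 'h" where
  "dbarH J g z = (1/2) *\<^sub>R (dx g z + J (dy g z))"

lemma dC_fderiv: "g differentiable at z \<Longrightarrow> dC g z = (fderiv g z 1 - \<i> * fderiv g z \<i>) / 2"
  unfolding dC_def by (simp add: dx_fderiv dy_fderiv)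

lemma dbarC_fderiv: "g differentiable at z \<Longrightarrow> dbarC g z = (fderiv g z 1 + \<i> * fderiv g z \<i>) / 2"
  unfolding dbarC_def by (simp add: dx_fderiv dy_fderiv)

lemma dC_const [simp]: "dC (\<lambda>w. c) z = 0"
  by (simp add: dC_fderiv fderiv_eq[OF has_derivative_const])

lemma dC_diff:
  "f differentiable at z \<Longrightarrow> g differentiable at z \<Longrightarrow> dC (\<lambda>w. f w - g w) z = dC f z - dC g z"
  by (simp add: dC_fderiv fderiv_eq[OF has_derivative_diff[OF fderiv_works fderiv_works]]
      differentiable_diff field_simps)

lemma dbarC_diff:
  "f differentiable at z \<Longrightarrow> g differentiable at z \<Longrightarrow> dbarC (\<lambda>w. f w - g w) z = dbarC f z - dbarC g z"
  by (simp add: dbarC_fderiv fderiv_eq[OF has_derivative_diff[OF fderiv_works fderiv_works]]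
      differentiable_diff field_simps)

lemma dC_mult:
  "f differentiable at z \<Longrightarrow> g differentiable at z \<Longrightarrow> dC (\<lambda>w. f w * g w) z = dC f z * g z + f z * dC g z"
  using fderiv_bounded_bilinear[OF bounded_bilinear_mult, of f z g]
  by (simp add: dC_fderiv differentiable_mult algebra_simps add_divide_distrib diff_divide_distrib)

lemma has_derivative_of_real_compose:
  fixes R :: "complex \<Rightarrow> real"
  assumes "R differentiable at z" "(\<phi> has_real_derivative d) (at (R z))"
  shows "((\<lambda>w. complex_of_real (\<phi> (R w))) has_derivative
           (\<lambda>u. complex_of_real d * complex_of_real (fderiv R z u))) (at z)"
proof -
  have "(\<lambda>h::real. d * h) = (\<lambda>h. h * d)"
    by (auto simp: mult.commute)
  then have "(\<phi> has_derivative (\<lambda>h. h * d)) (at (R z))"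
    using assms(2) unfolding has_field_derivative_def by simp
  from bounded_linear.has_derivative[OF bounded_linear_of_real
      has_derivative_compose[OF fderiv_works[OF assms(1)] this]]
  show ?thesis by (simp add: mult.commute)
qed

lemma dC_of_real_compose:
  fixes R :: "complex \<Rightarrow> real"
  assumes "R differentiable at z" "(\<phi> has_real_derivative d) (at (R z))"
  shows "dC (\<lambda>w. complex_of_real (\<phi> (R w))) z = complex_of_real d * dC (\<lambda>w. complex_of_real (R w)) z"
proof -
  note h1 = has_derivative_of_real_compose[OF assms]
  note h2 = bounded_linear.has_derivative[OF bounded_linear_of_real fderiv_works[OF assms(1)]]
  show ?thesis
    unfolding dC_def dx_has_derivative[OF h1] dy_has_derivative[OF h1]
      dx_has_derivative[OF h2] dy_has_derivative[OF h2]
    by (simp add: algebra_simps diff_divide_distrib)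
qed

lemma dbarC_of_real_compose:
  fixes R :: "complex \<Rightarrow> real"
  assumes "R differentiable at z" "(\<phi> has_real_derivative d) (at (R z))"
  shows "dbarC (\<lambda>w. complex_of_real (\<phi> (R w))) z = complex_of_real d * dbarC (\<lambda>w. complex_of_real (R w)) z"
proof -
  note h1 = has_derivative_of_real_compose[OF assms]
  note h2 = bounded_linear.has_derivative[OF bounded_linear_of_real fderiv_works[OF assms(1)]]
  show ?thesis
    unfolding dbarC_def dx_has_derivative[OF h1] dy_has_derivative[OF h1]
      dx_has_derivative[OF h2] dy_has_derivative[OF h2]
    by (simp add: algebra_simps add_divide_distrib)
qed

lemma differentiable_dbarC:
  assumes "twice_differentiable (g :: complex \<Rightarrow> complex)"
  shows "dbarC g differentiable at z"
proof -
  have "dbarC g = (\<lambda>w. (dx g w + \<i> * dy g w) / 2)"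
    by (rule ext) (simp add: dbarC_def)
  then show ?thesis
    using differentiable_dx[OF assms] differentiable_dy[OF assms]
    by (simp add: differentiable_add differentiable_mult differentiable_divide)
qed

context complex_hilbert
begin

lemma dH_fderiv: "g differentiable at z \<Longrightarrow> dH J g z = (1/2) *\<^sub>R (fderiv g z 1 - J (fderiv g z \<i>))"
  unfolding dH_def by (simp add: dx_fderiv dy_fderiv)

lemma dbarH_fderiv: "g differentiable at z \<Longrightarrow> dbarH J g z = (1/2) *\<^sub>R (fderiv g z 1 + J (fderiv g z \<i>))"
  unfolding dbarH_def by (simp add: dx_fderiv dy_fderiv)

lemma dH_add:
  "f differentiable at z \<Longrightarrow> g differentiable at z \<Longrightarrow> dH J (\<lambda>w. f w + g w) z = dH J f z + dH J g z"
  by (simp add: dH_fderiv fderiv_eq[OF has_derivative_add[OF fderiv_works fderiv_works]]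
      differentiable_add algebra_simps)

lemma dbarH_add:
  "f differentiable at z \<Longrightarrow> g differentiable at z \<Longrightarrow> dbarH J (\<lambda>w. f w + g w) z = dbarH J f z + dbarH J g z"
  by (simp add: dbarH_fderiv fderiv_eq[OF has_derivative_add[OF fderiv_works fderiv_works]]
      differentiable_add algebra_simps)

lemma dH_diff:
  "f differentiable at z \<Longrightarrow> g differentiable at z \<Longrightarrow> dH J (\<lambda>w. f w - g w) z = dH J f z - dH J g z"
  by (simp add: dH_fderiv fderiv_eq[OF has_derivative_diff[OF fderiv_works fderiv_works]]
      differentiable_diff algebra_simps)

lemma dbarH_diff:
  "f differentiable at z \<Longrightarrow> g differentiable at z \<Longrightarrow> dbarH J (\<lambda>w. f w - g w) z = dbarH J f z - dbarH J g z"
  by (simp add: dbarH_fderiv fderiv_eq[OF has_derivative_diff[OF fderiv_works fderiv_works]]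
      differentiable_diff algebra_simps)

lemma dH_sum:
  "finite A \<Longrightarrow> (\<And>i. i \<in> A \<Longrightarrow> g i differentiable at z) \<Longrightarrow>
   dH J (\<lambda>w. \<Sum>i\<in>A. g i w) z = (\<Sum>i\<in>A. dH J (g i) z)"
proof (induction A rule: finite_induct)
  case (insert x F)
  then show ?case
    using dH_add[of "g x" z "\<lambda>w. \<Sum>i\<in>F. g i w"] by (simp add: differentiable_sum)
qed (simp add: dH_fderiv fderiv_eq[OF has_derivative_const])

lemma dbarH_sum:
  "finite A \<Longrightarrow> (\<And>i. i \<in> A \<Longrightarrow> g i differentiable at z) \<Longrightarrow>
   dbarH J (\<lambda>w. \<Sum>i\<in>A. g i w) z = (\<Sum>i\<in>A. dbarH J (g i) z)"
proof (induction A rule: finite_induct)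
  case (insert x F)
  then show ?case
    using dbarH_add[of "g x" z "\<lambda>w. \<Sum>i\<in>F. g i w"] by (simp add: differentiable_sum)
qed (simp add: dbarH_fderiv fderiv_eq[OF has_derivative_const])

lemma dC_cinner:
  assumes "a differentiable at z" "b differentiable at z"
  shows "dC (\<lambda>w. cinner J (a w) (b w)) z = cinner J (dbarH J a z) (b z) + cinner J (a z) (dH J b z)"
  using fderiv_bounded_bilinear[OF bounded_bilinear_cinner assms]
  by (simp add: dC_fderiv dH_fderiv dbarH_fderiv assms
      differentiable_bounded_bilinear[OF bounded_bilinear_cinner assms] algebra_simps
      add_divide_distrib diff_divide_distrib)

lemma dbarC_cinner:
  assumes "a differentiable at z" "b differentiable at z"
  shows "dbarC (\<lambda>w. cinner J (a w) (b w)) z = cinner J (dH J a z) (b z) + cinner J (a z) (dbarH J b z)"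
  using fderiv_bounded_bilinear[OF bounded_bilinear_cinner assms]
  by (simp add: dbarC_fderiv dH_fderiv dbarH_fderiv assms
      differentiable_bounded_bilinear[OF bounded_bilinear_cinner assms] algebra_simps
      add_divide_distrib diff_divide_distrib)

lemma dH_cscale:
  assumes "c differentiable at z" "w differentiable at z"
  shows "dH J (\<lambda>t. cscale J (c t) (w t)) z = cscale J (dC c z) (w z) + cscale J (c z) (dH J w z)"
  using fderiv_bounded_bilinear[OF bounded_bilinear_cscale assms]
  by (simp add: dC_fderiv dH_fderiv assms differentiable_bounded_bilinear[OF bounded_bilinear_cscale assms]
      algebra_simps add_divide_distrib diff_divide_distrib cscale_half cscale_i_mult)

lemma dbarH_cscale:
  assumes "c differentiable at z" "w differentiable at z"
  shows "dbarH J (\<lambda>t. cscale J (c t) (w t)) z = cscale J (dbarC c z) (w z) + cscale J (c z) (dbarH J w z)"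
  using fderiv_bounded_bilinear[OF bounded_bilinear_cscale assms]
  by (simp add: dbarC_fderiv dbarH_fderiv assms differentiable_bounded_bilinear[OF bounded_bilinear_cscale assms]
      algebra_simps add_divide_distrib diff_divide_distrib cscale_half cscale_i_mult)

lemma dH_dbarH_complex_derivative:
  assumes "(g has_derivative (\<lambda>w. cscale J w v)) (at z)"
  shows "dH J g z = v" "dbarH J g z = 0"
  using assms unfolding dH_def dbarH_def
  by (simp_all add: dx_has_derivative dy_has_derivative scaleR_2[symmetric])

lemma differentiable_dH:
  assumes "twice_differentiable g"
  shows "dH J g differentiable at z"
proof -
  have "dH J g = (\<lambda>w. (1/2) *\<^sub>R (dx g w - J (dy g w)))"
    by (rule ext) (simp add: dH_def)
  moreover have "(\<lambda>w. J (dy g w)) differentiable at z"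
    using bounded_linear.has_derivative[OF bounded_linear_J fderiv_works[OF differentiable_dy[OF assms]]]
    by (rule differentiableI)
  ultimately show ?thesis
    using differentiable_dx[OF assms] by (simp add: differentiable_diff differentiable_scaleR)
qed

lemma dH_dbarH_commute:
  assumes "twice_differentiable g"
  shows "dH J (dbarH J g) z = dbarH J (dH J g) z"
proof -
  have comb: "((\<lambda>w. (1/2) *\<^sub>R (dx g w + s *\<^sub>R J (dy g w))) has_derivative
      (\<lambda>u. (1/2) *\<^sub>R (fderiv (dx g) z u + s *\<^sub>R J (fderiv (dy g) z u)))) (at z)" for s
    by (intro has_derivative_scaleR_right has_derivative_add fderiv_works
        bounded_linear.has_derivative[OF bounded_linear_J] differentiable_dx differentiable_dy assms)
  have dbarH_g: "dbarH J g = (\<lambda>w. (1/2) *\<^sub>R (dx g w + 1 *\<^sub>R J (dy g w)))"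
    unfolding dbarH_def by auto
  have 1: "dH J (dbarH J g) z = (1/4) *\<^sub>R (dx (dx g) z + dy (dy g) z)"
    unfolding dH_def dbarH_g dx_has_derivative[OF comb] dy_has_derivative[OF comb]
    using dy_dx_commute[OF assms, of z]
    by (simp add: dx_fderiv dy_fderiv differentiable_dx differentiable_dy assms algebra_simps)
  have dH_g: "dH J g = (\<lambda>w. (1/2) *\<^sub>R (dx g w + (-1) *\<^sub>R J (dy g w)))"
    unfolding dH_def by auto
  have 2: "dbarH J (dH J g) z = (1/4) *\<^sub>R (dx (dx g) z + dy (dy g) z)"
    unfolding dbarH_def dH_g dx_has_derivative[OF comb] dy_has_derivative[OF comb]
    using dy_dx_commute[OF assms, of z]
    by (simp add: dx_fderiv dy_fderiv differentiable_dx differentiable_dy assms algebra_simps)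
  show ?thesis
    unfolding 1 2 ..
qed

end

subsection \<open>Holomorphic maps into the Hilbert space\<close>

lemma holomorphic_third_deriv_bound:
  fixes g :: "complex \<Rightarrow> complex"
  assumes g: "g holomorphic_on UNIV" and B: "\<And>x. x \<in> cball z0 3 \<Longrightarrow> cmod (g x) \<le> B"
    and w: "w \<in> cball z0 1"
  shows "cmod (deriv (deriv (deriv g)) w) \<le> B"
proof -
  have "cmod ((deriv ^^ 3) g w) \<le> fact 3 * B / 2^3"
  proof (rule Cauchy_inequality)
    show "g holomorphic_on ball w 2"
      using g by (rule holomorphic_on_subset) simp
    show "continuous_on (cball w 2) g"
      using holomorphic_on_imp_continuous_on[OF g] by (rule continuous_on_subset) simp
    fix x assume "norm (w - x) = 2"
    then have "dist z0 x \<le> 3"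
      using w dist_triangle[of z0 x w] by (simp add: dist_norm norm_minus_commute)
    then show "cmod (g x) \<le> B" using B by simp
  qed simp
  also have "\<dots> \<le> B"
    using order_trans[OF norm_ge_zero B[of z0]] by (simp add: fact_numeral)
  finally show ?thesis by (simp add: numeral_3_eq_3)
qed

lemma holomorphic_second_order_taylor_bound:
  fixes g :: "complex \<Rightarrow> complex"
  assumes g: "g holomorphic_on UNIV" and B: "\<And>x. x \<in> cball z0 3 \<Longrightarrow> cmod (g x) \<le> B"
    and h: "cmod h \<le> 1"
  shows "cmod (deriv g (z0 + h) - deriv g z0 - h * deriv (deriv g) z0) \<le> B * (cmod h)\<^sup>2"
proof -
  have B0: "B \<ge> 0"
    using B[of z0] by (meson centre_in_cball norm_ge_zero order_trans zero_le_numeral)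
  have g1: "deriv g holomorphic_on UNIV" using g by (rule holomorphic_deriv) simp
  have g2: "deriv (deriv g) holomorphic_on UNIV" using g1 by (rule holomorphic_deriv) simp
  define S where "S = cball z0 (cmod h)"
  have S: "convex S" "z0 \<in> S" "z0 + h \<in> S" "S \<subseteq> cball z0 1"
    unfolding S_def using h by (auto simp: dist_norm)
  have d2: "cmod (deriv (deriv g) w - deriv (deriv g) z0) \<le> B * cmod h" if "w \<in> S" for w
  proof -
    have "cmod (deriv (deriv g) w - deriv (deriv g) z0) \<le> B * cmod (w - z0)"
    proof (rule field_differentiable_bound[OF S(1) _ _ that S(2)])
      fix z assume "z \<in> S"
      show "(deriv (deriv g) has_field_derivative deriv (deriv (deriv g)) z) (at z within S)"
        using g2 by (rule holomorphic_derivI) auto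
      show "cmod (deriv (deriv (deriv g)) z) \<le> B"
        using holomorphic_third_deriv_bound[OF g B] S(4) \<open>z \<in> S\<close> by auto
    qed
    also have "\<dots> \<le> B * cmod h"
      using that B0 unfolding S_def by (intro mult_left_mono) (auto simp: dist_norm norm_minus_commute)
    finally show ?thesis .
  qed
  have "cmod ((deriv g (z0 + h) - (z0 + h) * deriv (deriv g) z0) - (deriv g z0 - z0 * deriv (deriv g) z0))
        \<le> (B * cmod h) * cmod ((z0 + h) - z0)"
  proof (rule field_differentiable_bound[OF S(1) _ _ S(3) S(2)])
    fix z assume "z \<in> S"
    have "(deriv g has_field_derivative deriv (deriv g) z) (at z within S)"
      using g1 by (rule holomorphic_derivI) auto
    then show "((\<lambda>w. deriv g w - w * deriv (deriv g) z0) has_field_derivative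
           (deriv (deriv g) z - deriv (deriv g) z0)) (at z within S)"
      by (auto intro!: derivative_eq_intros)
    show "cmod (deriv (deriv g) z - deriv (deriv g) z0) \<le> B * cmod h"
      using d2 \<open>z \<in> S\<close> .
  qed
  then show ?thesis by (simp add: algebra_simps power2_eq_square)
qed

lemma difference_quotient_limit:
  fixes Q :: "complex \<Rightarrow> 'a::{real_normed_vector, complete_space}"
  assumes M: "M > 0"
    and Q: "\<And>h k. 0 < cmod h \<Longrightarrow> cmod h \<le> 1 \<Longrightarrow> 0 < cmod k \<Longrightarrow> cmod k \<le> 1 \<Longrightarrow>
              norm (Q h - Q k) \<le> M * (cmod h + cmod k)"
  obtains L where "\<And>h. 0 < cmod h \<Longrightarrow> cmod h \<le> 1 \<Longrightarrow> norm (Q h - L) \<le> M * cmod h"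
proof -
  define \<epsilon> where "\<epsilon> n = 1 / complex_of_nat (Suc n)" for n
  have \<epsilon>: "cmod (\<epsilon> n) = 1 / real (Suc n)" "0 < cmod (\<epsilon> n)" "cmod (\<epsilon> n) \<le> 1" for n
    unfolding \<epsilon>_def by (simp_all add: norm_divide del: of_nat_Suc)
  have \<epsilon>_lim: "(\<lambda>n. cmod (\<epsilon> n)) \<longlonglongrightarrow> 0"
    unfolding \<epsilon>(1) using LIMSEQ_inverse_real_of_nat by (simp add: inverse_eq_divide del: of_nat_Suc)
  have "Cauchy (\<lambda>n. Q (\<epsilon> n))"
  proof (rule CauchyI)
    fix e :: real assume e: "0 < e"
    obtain N where N: "\<And>n. n \<ge> N \<Longrightarrow> cmod (\<epsilon> n) < e / (2 * M)"
      using LIMSEQ_D[OF \<epsilon>_lim, of "e / (2 * M)"] e M by auto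
    show "\<exists>N. \<forall>m\<ge>N. \<forall>n\<ge>N. norm (Q (\<epsilon> m) - Q (\<epsilon> n)) < e"
    proof (intro exI[of _ N] allI impI)
      fix m n assume "m \<ge> N" "n \<ge> N"
      have "norm (Q (\<epsilon> m) - Q (\<epsilon> n)) \<le> M * (cmod (\<epsilon> m) + cmod (\<epsilon> n))"
        using Q \<epsilon> by blast
      also have "\<dots> < M * (e / (2 * M) + e / (2 * M))"
        using N \<open>m \<ge> N\<close> \<open>n \<ge> N\<close> M by (intro mult_strict_left_mono add_strict_mono) auto
      also have "\<dots> = e" using M by (simp add: field_simps)
      finally show "norm (Q (\<epsilon> m) - Q (\<epsilon> n)) < e" .
    qed
  qed
  then obtain L where L: "(\<lambda>n. Q (\<epsilon> n)) \<longlonglongrightarrow> L"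
    using convergent_eq_Cauchy by blast
  have "norm (Q h - L) \<le> M * cmod h" if "0 < cmod h" "cmod h \<le> 1" for h
  proof (rule tendsto_le[OF trivial_limit_sequentially])
    show "(\<lambda>n. norm (Q h - Q (\<epsilon> n))) \<longlonglongrightarrow> norm (Q h - L)"
      by (intro tendsto_intros L)
    show "(\<lambda>n. M * (cmod h + cmod (\<epsilon> n))) \<longlonglongrightarrow> M * cmod h"
      using tendsto_add[OF tendsto_const \<epsilon>_lim, of "cmod h"] by (auto intro: tendsto_mult_left)
    show "\<forall>\<^sub>F n in sequentially. norm (Q h - Q (\<epsilon> n)) \<le> M * (cmod h + cmod (\<epsilon> n))"
      using Q[OF that \<epsilon>(2,3)] by simp
  qed
  then show ?thesis by (rule that)
qed

context complex_hilbert
begin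

lemma has_field_derivative_cinner_right:
  assumes "(f has_derivative (\<lambda>w. cscale J w v)) (at z)"
  shows "((\<lambda>z. cinner J x (f z)) has_field_derivative cinner J x v) (at z)"
proof -
  have "((\<lambda>z. cinner J x (f z)) has_derivative (\<lambda>w. cinner J x (cscale J w v))) (at z)"
    by (rule bounded_linear.has_derivative[OF
          bounded_bilinear.bounded_linear_right[OF bounded_bilinear_cinner] assms])
  moreover have "(\<lambda>w. cinner J x (cscale J w v)) = (*) (cinner J x v)"
    by (auto simp: mult.commute)
  ultimately show ?thesis
    unfolding has_field_derivative_def by simp
qed

text \<open>The difference quotients Q h of f' are tested against x = Q h - Q k: the scalar function
  < x, f > is holomorphic, so its second-order Taylor estimate bounds |x|^2 = < x, Q h - Q k >
  by |x| M (|h| + |k|).\<close>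

lemma difference_quotient_estimate:
  assumes f: "\<And>z. (f has_derivative (\<lambda>w. cscale J w (f' z))) (at z)"
    and M: "\<And>x. x \<in> cball z0 3 \<Longrightarrow> norm (f x) \<le> M"
    and Q_def: "\<And>h. Q h = cscale J (1 / h) (f' (z0 + h) - f' z0)"
    and h: "0 < cmod h" "cmod h \<le> 1" and k: "0 < cmod k" "cmod k \<le> 1"
  shows "norm (Q h - Q k) \<le> M * (cmod h + cmod k)"
proof -
  define x where "x = Q h - Q k"
  define g where "g z = cinner J x (f z)" for z
  have dg: "(g has_field_derivative cinner J x (f' z)) (at z)" for z
    unfolding g_def by (rule has_field_derivative_cinner_right[OF f])
  then have g: "g holomorphic_on UNIV"
    unfolding holomorphic_on_def field_differentiable_def using has_field_derivative_at_within by blast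
  have deriv_g: "deriv g = (\<lambda>z. cinner J x (f' z))"
    by (rule ext, rule DERIV_imp_deriv[OF dg])
  have g_bound: "cmod (g y) \<le> norm x * M" if "y \<in> cball z0 3" for y
    unfolding g_def using norm_cinner_le[of x "f y"] mult_left_mono[OF M[OF that], of "norm x"] by simp
  define c where "c = deriv (deriv g) z0"
  have taylor: "cmod (cinner J x (f' (z0 + t)) - cinner J x (f' z0) - t * c) \<le> norm x * M * (cmod t)\<^sup>2"
    if "cmod t \<le> 1" for t
    using holomorphic_second_order_taylor_bound[OF g _ that] g_bound unfolding deriv_g c_def by blast
  define err where "err t = (cinner J x (f' (z0 + t)) - cinner J x (f' z0) - t * c) / t" for t
  have err: "cmod (err t) \<le> norm x * M * cmod t" if "0 < cmod t" "cmod t \<le> 1" for t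
    using taylor[OF that(2)] that unfolding err_def
    by (simp add: norm_divide field_simps power2_eq_square)
  have "cinner J x (Q t) = c + err t" if "0 < cmod t" for t
    using that unfolding Q_def err_def by (simp add: field_simps)
  then have "cinner J x x = err h - err k"
    using h k unfolding x_def[symmetric] by (simp add: x_def)
  then have "complex_of_real ((norm x)\<^sup>2) = err h - err k"
    by (simp only: cinner_self)
  then have "(norm x)\<^sup>2 = cmod (err h - err k)"
    by (metis norm_of_real abs_power2 power2_abs abs_norm_cancel)
  also have "\<dots> \<le> norm x * M * cmod h + norm x * M * cmod k"
    using err[OF h] err[OF k] norm_triangle_ineq4[of "err h" "err k"] by simp
  finally have "norm x * norm x \<le> norm x * (M * (cmod h + cmod k))"
    by (simp add: algebra_simps power2_eq_square)
  moreover have "M \<ge> 0"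
    using order_trans[OF norm_ge_zero M[of z0]] by simp
  ultimately show ?thesis
    unfolding x_def[symmetric] by (cases "norm x = 0") (auto simp: mult_le_cancel_left_pos)
qed

lemma complex_derivative_differentiable:
  assumes f: "\<And>z. (f has_derivative (\<lambda>w. cscale J w (f' z))) (at z)"
  obtains L where "(f' has_derivative (\<lambda>w. cscale J w L)) (at z0)"
proof -
  have "continuous_on (cball z0 3) f"
    by (intro continuous_at_imp_continuous_on ballI has_derivative_continuous[OF f])
  then have "bounded (f ` cball z0 3)"
    by (intro compact_imp_bounded compact_continuous_image compact_cball)
  then obtain M where M: "M > 0" "\<And>x. x \<in> cball z0 3 \<Longrightarrow> norm (f x) \<le> M"
    unfolding bounded_pos by auto
  define Q where "Q h = cscale J (1 / h) (f' (z0 + h) - f' z0)" for h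
  obtain L where L: "\<And>h. 0 < cmod h \<Longrightarrow> cmod h \<le> 1 \<Longrightarrow> norm (Q h - L) \<le> M * cmod h"
    using difference_quotient_limit[OF M(1) difference_quotient_estimate[OF f M(2) Q_def]] by blast
  have "(f' has_derivative (\<lambda>w. cscale J w L)) (at z0)"
  proof (intro has_derivative_at_alt[THEN iffD2] conjI allI impI)
    show "bounded_linear (\<lambda>w. cscale J w L)"
      by (rule bounded_bilinear.bounded_linear_left[OF bounded_bilinear_cscale])
    fix e :: real assume e: "0 < e"
    show "\<exists>d>0. \<forall>y. norm (y - z0) < d \<longrightarrow>
            norm (f' y - f' z0 - cscale J (y - z0) L) \<le> e * norm (y - z0)"
    proof (intro exI[of _ "min 1 (e / M)"] conjI allI impI)
      show "0 < min 1 (e / M)" using e M by simp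
      fix y assume y: "norm (y - z0) < min 1 (e / M)"
      show "norm (f' y - f' z0 - cscale J (y - z0) L) \<le> e * norm (y - z0)"
      proof (cases "y = z0")
        case False
        define h where "h = y - z0"
        have "f' y - f' z0 = cscale J h (Q h)"
          unfolding Q_def h_def using False by (simp add: cscale_mult h_def)
        then have "f' y - f' z0 - cscale J (y - z0) L = cscale J h (Q h - L)"
          unfolding h_def by simp
        then have "norm (f' y - f' z0 - cscale J (y - z0) L) = cmod h * norm (Q h - L)"
          by (simp only: norm_cscale)
        also have "\<dots> \<le> cmod h * (M * cmod h)"
          using L[of h] False y unfolding h_def by (intro mult_left_mono) auto
        also have "\<dots> \<le> cmod h * e"
          using y M unfolding h_def by (intro mult_left_mono) (auto simp: field_simps)
        finally show ?thesis unfolding h_def by (simp add: mult.commute)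
      qed simp
    qed
  qed
  then show ?thesis by (rule that)
qed

lemma dn_Suc: "dn J f (Suc n) = dH J (dn J f n)"
  unfolding dn_def by simp

lemma dn_has_derivative:
  assumes "holoH J f"
  shows "(dn J f n has_derivative (\<lambda>w. cscale J w (dn J f (Suc n) z))) (at z)"
proof (induction n arbitrary: z)
  case 0
  obtain v where "(f has_derivative (\<lambda>w. cscale J w v)) (at z)"
    using assms unfolding holoH_def by blast
  then show ?case
    using dH_dbarH_complex_derivative(1) by (simp add: dn_Suc dn_def)
next
  case (Suc n)
  obtain L where "(dn J f (Suc n) has_derivative (\<lambda>w. cscale J w L)) (at z)"
    using complex_derivative_differentiable[OF Suc.IH] by blast
  then show ?case
    using dH_dbarH_complex_derivative(1) by (simp add: dn_Suc)
qed

lemma dbarH_dn: "holoH J f \<Longrightarrow> dbarH J (dn J f n) z = 0"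
  using dH_dbarH_complex_derivative(2)[OF dn_has_derivative] by blast

lemma twice_differentiable_dn:
  assumes "holoH J f"
  shows "twice_differentiable (dn J f n)"
proof (rule twice_differentiableI[where D="\<lambda>z u. cscale J u (dn J f (Suc n) z)"])
  show "(dn J f n has_derivative (\<lambda>u. cscale J u (dn J f (Suc n) z))) (at z)" for z
    by (rule dn_has_derivative[OF assms])
  show "(\<lambda>w. cscale J u (dn J f (Suc n) w)) differentiable at z" for u z
    using bounded_linear.has_derivative[OF bounded_bilinear.bounded_linear_right[OF
          bounded_bilinear_cscale] dn_has_derivative[OF assms]]
    by (rule differentiableI)
qed

end

subsection \<open>Gram--Schmidt orthogonalisation\<close>

context complex_hilbert
begin

lemma cspan_upto_zero [simp]: "0 \<in> cspan_upto J w n"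
  unfolding cspan_upto_def by (auto intro!: exI[of _ "\<lambda>k. 0"])

lemma cspan_upto_0: "cspan_upto J w 0 = {0}"
  unfolding cspan_upto_def by auto

lemma cspan_upto_add: "x \<in> cspan_upto J w n \<Longrightarrow> y \<in> cspan_upto J w n \<Longrightarrow> x + y \<in> cspan_upto J w n"
proof -
  assume "x \<in> cspan_upto J w n" "y \<in> cspan_upto J w n"
  then obtain c d where "x = (\<Sum>k<n. cscale J (c k) (w k))" "y = (\<Sum>k<n. cscale J (d k) (w k))"
    unfolding cspan_upto_def by auto
  then have "x + y = (\<Sum>k<n. cscale J (c k + d k) (w k))"
    by (simp add: sum.distrib)
  then show ?thesis
    unfolding cspan_upto_def by (intro CollectI exI[of _ "\<lambda>k. c k + d k"]) simp
qed

lemma cspan_upto_cscale: "x \<in> cspan_upto J w n \<Longrightarrow> cscale J a x \<in> cspan_upto J w n"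
proof -
  assume "x \<in> cspan_upto J w n"
  then obtain c where "x = (\<Sum>k<n. cscale J (c k) (w k))"
    unfolding cspan_upto_def by auto
  then have "cscale J a x = (\<Sum>k<n. cscale J (a * c k) (w k))"
    by (simp add: cscale_sum_right cscale_mult)
  then show ?thesis
    unfolding cspan_upto_def by (intro CollectI exI[of _ "\<lambda>k. a * c k"]) simp
qed

lemma cspan_upto_minus: "x \<in> cspan_upto J w n \<Longrightarrow> - x \<in> cspan_upto J w n"
  using cspan_upto_cscale[of x w n "-1"] by simp

lemma cspan_upto_diff: "x \<in> cspan_upto J w n \<Longrightarrow> y \<in> cspan_upto J w n \<Longrightarrow> x - y \<in> cspan_upto J w n"
  using cspan_upto_add[of x w n "- y"] cspan_upto_minus[of y w n] by simp

lemma cspan_upto_sum: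
  "finite A \<Longrightarrow> (\<And>i. i \<in> A \<Longrightarrow> g i \<in> cspan_upto J w n) \<Longrightarrow> (\<Sum>i\<in>A. g i) \<in> cspan_upto J w n"
  by (induction A rule: finite_induct) (auto intro: cspan_upto_add)

lemma cspan_upto_mem: "k < n \<Longrightarrow> w k \<in> cspan_upto J w n"
  unfolding cspan_upto_def
proof (intro CollectI exI[of _ "\<lambda>i. if i = k then 1 else 0"] conjI TrueI)
  assume "k < n"
  have "(\<Sum>i<n. cscale J (if i = k then 1 else 0) (w i)) = (\<Sum>i<n. if i = k then w i else 0)"
    by (rule sum.cong) auto
  also have "\<dots> = w k" using \<open>k < n\<close> by (simp add: sum.delta)
  finally show "w k = (\<Sum>i<n. cscale J (if i = k then 1 else 0) (w i))" by simp
qed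

lemma cspan_upto_mono: "k \<le> n \<Longrightarrow> x \<in> cspan_upto J w k \<Longrightarrow> x \<in> cspan_upto J w n"
proof -
  assume "k \<le> n" "x \<in> cspan_upto J w k"
  then obtain c where "x = (\<Sum>i<k. cscale J (c i) (w i))"
    unfolding cspan_upto_def by auto
  moreover have "(\<Sum>i<k. cscale J (c i) (w i)) \<in> cspan_upto J w n"
    using \<open>k \<le> n\<close> by (intro cspan_upto_sum cspan_upto_cscale cspan_upto_mem) auto
  ultimately show ?thesis by simp
qed

lemma cinner_cspan_upto_eq_0:
  assumes "\<And>j. j < n \<Longrightarrow> cinner J (w j) d = 0" "s \<in> cspan_upto J w n"
  shows "cinner J s d = 0"
  using assms unfolding cspan_upto_def by (auto simp: cinner_sum_left)

lemma cspan_upto_orthogonal_eq_0: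
  assumes "x \<in> cspan_upto J w n" "\<And>j. j < n \<Longrightarrow> cinner J (w j) x = 0"
  shows "x = 0"
  using cinner_cspan_upto_eq_0[OF assms(2) assms(1)] by simp

lemma perp_part_unique:
  assumes "x - y \<in> cspan_upto J w n" "\<And>s. s \<in> cspan_upto J w n \<Longrightarrow> cinner J s y = 0"
  shows "perp_part J (cspan_upto J w n) x = y"
  unfolding perp_part_def
proof (rule the_equality)
  show "x - y \<in> cspan_upto J w n \<and> (\<forall>s\<in>cspan_upto J w n. cinner J s y = 0)"
    using assms by auto
  fix u assume u: "x - u \<in> cspan_upto J w n \<and> (\<forall>s\<in>cspan_upto J w n. cinner J s u = 0)"
  have d: "u - y \<in> cspan_upto J w n"
    using cspan_upto_diff[OF assms(1), of "x - u"] u by simp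
  have "cinner J (u - y) u = 0" "cinner J (u - y) y = 0"
    using u assms(2)[OF d] d by blast+
  then have "cinner J (u - y) (u - y) = 0"
    by (simp only: cinner_simps(3)) simp
  then show "u = y" by (simp only: cinner_self_eq_0 right_minus_eq)
qed

lemma gram_schmidt_in_span:
  assumes "\<And>k. k < n \<Longrightarrow> e k - u k \<in> cspan_upto J e k" "j < k" "k \<le> n"
  shows "u j \<in> cspan_upto J e k"
  using cspan_upto_diff[OF cspan_upto_mem[OF assms(2)]
      cspan_upto_mono[OF _ assms(1), of j k]] assms(2,3) by simp

lemma gram_schmidt_orthogonal:
  assumes span: "\<And>k. k < n \<Longrightarrow> e k - u k \<in> cspan_upto J e k"
    and perp: "\<And>k s. k < n \<Longrightarrow> s \<in> cspan_upto J e k \<Longrightarrow> cinner J s (u k) = 0"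
    and "j < n" "k < n" "j \<noteq> k"
  shows "cinner J (u j) (u k) = 0"
proof (cases "j < k")
  case True
  then show ?thesis
    using perp[OF \<open>k < n\<close> gram_schmidt_in_span[OF span True]] \<open>k < n\<close> by simp
next
  case False
  then have "k < j" using \<open>j \<noteq> k\<close> by simp
  then have "cinner J (u k) (u j) = 0"
    using perp[OF \<open>j < n\<close> gram_schmidt_in_span[OF span \<open>k < j\<close>]] \<open>j < n\<close> by simp
  then show ?thesis by (subst cinner_commute) simp
qed

lemma perp_part_gram_schmidt:
  assumes span: "\<And>k. k < n \<Longrightarrow> e k - u k \<in> cspan_upto J e k"
    and perp: "\<And>k s. k < n \<Longrightarrow> s \<in> cspan_upto J e k \<Longrightarrow> cinner J s (u k) = 0"
    and nz: "\<And>k. k < n \<Longrightarrow> u k \<noteq> 0"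
  defines "w \<equiv> e n - (\<Sum>k<n. cscale J (cinner J (u k) (e n) / complex_of_real ((norm (u k))\<^sup>2)) (u k))"
  shows "e n - w \<in> cspan_upto J e n" "\<And>s. s \<in> cspan_upto J e n \<Longrightarrow> cinner J s w = 0"
    and "perp_part J (cspan_upto J e n) (e n) = w"
proof -
  define c where "c k = cinner J (u k) (e n) / complex_of_real ((norm (u k))\<^sup>2)" for k
  have w: "w = e n - (\<Sum>k<n. cscale J (c k) (u k))"
    unfolding w_def c_def ..
  have u_w: "cinner J (u j) w = 0" if j: "j < n" for j
  proof -
    have "cinner J (u j) w = cinner J (u j) (e n) - (\<Sum>k<n. c k * cinner J (u j) (u k))"
      unfolding w by (simp add: cinner_sum_right)
    also have "(\<Sum>k<n. c k * cinner J (u j) (u k)) = (\<Sum>k<n. if k = j then c j * cinner J (u j) (u j) else 0)"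
      by (rule sum.cong) (auto simp: gram_schmidt_orthogonal[OF span perp] j)
    also have "\<dots> = cinner J (u j) (e n)"
      using j nz[OF j] unfolding c_def cinner_self by simp
    finally show ?thesis by simp
  qed
  have e_w: "j < n \<Longrightarrow> cinner J (e j) w = 0" for j
  proof (induction j rule: less_induct)
    case (less j)
    have "cinner J (e i) w = 0" if "i < j" for i
      using less.prems that by (intro less.IH[OF that]) simp
    from cinner_cspan_upto_eq_0[OF this span[OF less.prems]]
    have "cinner J (e j - u j) w = 0" .
    then show ?case using u_w[OF less.prems] by simp
  qed
  show perp_w: "\<And>s. s \<in> cspan_upto J e n \<Longrightarrow> cinner J s w = 0"
    by (rule cinner_cspan_upto_eq_0[OF e_w])
  have "(\<Sum>k<n. cscale J (c k) (u k)) \<in> cspan_upto J e n"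
    by (intro cspan_upto_sum cspan_upto_cscale gram_schmidt_in_span[OF span]) auto
  then show span_w: "e n - w \<in> cspan_upto J e n"
    unfolding w by simp
  show "perp_part J (cspan_upto J e n) (e n) = w"
    by (rule perp_part_unique[OF span_w perp_w])
qed

end

subsection \<open>The generalized Landau levels\<close>

locale landau_levels = complex_hilbert J for J :: "'h::{real_inner, complete_space} \<Rightarrow> 'h" +
  fixes f :: "complex \<Rightarrow> 'h"
  assumes holo: "holoH J f" and indep: "\<And>z n. clin_indep J (\<lambda>k. dn J f k z) n"
begin

text \<open>In the notation of the paper, v n is the unnormalised level (1 - P_n) d^n f = r_n u_n,
  and R n = r_n^2.\<close>

abbreviation "S n z \<equiv> cspan_upto J (\<lambda>k. dn J f k z) n"
abbreviation "v n z \<equiv> perp_part J (S n z) (dn J f n z)"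
abbreviation "R n z \<equiv> (norm (v n z))\<^sup>2"

definition gs_coeff :: "nat \<Rightarrow> nat \<Rightarrow> complex \<Rightarrow> complex" where
  "gs_coeff n k z = cinner J (v k z) (dn J f n z) / complex_of_real (R k z)"

lemma dn_notin_span: "dn J f n z \<notin> S n z"
proof
  assume "dn J f n z \<in> S n z"
  then obtain a where a: "dn J f n z = (\<Sum>k<n. cscale J (a k) (dn J f k z))"
    unfolding cspan_upto_def by auto
  define b where "b k = (if k = n then -1 else a k)" for k
  have "(\<Sum>k\<le>n. cscale J (b k) (dn J f k z)) =
      (\<Sum>k<n. cscale J (a k) (dn J f k z)) - dn J f n z"
    unfolding lessThan_Suc_atMost[symmetric] by (simp add: b_def)
  then have "(\<Sum>k\<le>n. cscale J (b k) (dn J f k z)) = 0"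
    using a by simp
  then have "b n = 0"
    using indep[of z n] unfolding clin_indep_def by blast
  then show False by (simp add: b_def)
qed

lemma v_gram_schmidt:
  "dn J f n z - v n z \<in> S n z \<and> (\<forall>s\<in>S n z. cinner J s (v n z) = 0) \<and> v n z \<noteq> 0 \<and>
   v n z = dn J f n z - (\<Sum>k<n. cscale J (gs_coeff n k z) (v k z))"
proof (induction n rule: less_induct)
  case (less n)
  have IH: "\<And>k. k < n \<Longrightarrow> dn J f k z - v k z \<in> S k z"
    "\<And>k s. k < n \<Longrightarrow> s \<in> S k z \<Longrightarrow> cinner J s (v k z) = 0"
    "\<And>k. k < n \<Longrightarrow> v k z \<noteq> 0"
    using less.IH by blast+
  note step = perp_part_gram_schmidt[of n "\<lambda>k. dn J f k z" "\<lambda>k. v k z", OF IH]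
  have eq: "v n z = dn J f n z - (\<Sum>k<n. cscale J (gs_coeff n k z) (v k z))"
    unfolding gs_coeff_def by (rule step(3))
  have mem: "dn J f n z - v n z \<in> S n z"
    by (subst eq, unfold gs_coeff_def, rule step(1))
  have perp: "\<forall>s\<in>S n z. cinner J s (v n z) = 0"
    by (subst eq, unfold gs_coeff_def) (blast intro: step(2))
  have "v n z \<noteq> 0"
    using mem dn_notin_span[of n z] by (metis diff_zero)
  with eq mem perp show ?case by blast
qed

lemma dn_minus_v_in_span: "dn J f n z - v n z \<in> S n z"
  using v_gram_schmidt by blast

lemma cinner_v_eq_0: "s \<in> S n z \<Longrightarrow> cinner J s (v n z) = 0"
  using v_gram_schmidt by blast

lemma v_nonzero: "v n z \<noteq> 0"
  using v_gram_schmidt by blast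

lemma R_pos: "R n z > 0"
  using v_nonzero by simp

lemma v_eq: "v n = (\<lambda>z. dn J f n z - (\<Sum>k<n. cscale J (gs_coeff n k z) (v k z)))"
  by (rule ext) (use v_gram_schmidt in blast)

lemma v_in_span: "j < k \<Longrightarrow> v j z \<in> S k z"
  by (rule gram_schmidt_in_span[where n=k]) (auto intro: dn_minus_v_in_span)

lemma cinner_dn_v: "j < n \<Longrightarrow> cinner J (dn J f j z) (v n z) = 0"
  by (rule cinner_v_eq_0) (rule cspan_upto_mem)

lemma cinner_v_v: "j \<noteq> k \<Longrightarrow> cinner J (v j z) (v k z) = 0"
  by (rule gram_schmidt_orthogonal[where n="Suc (max j k)" and e="\<lambda>k. dn J f k z"])
    (auto intro: dn_minus_v_in_span cinner_v_eq_0)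

lemma cinner_dn_v_self: "cinner J (dn J f n z) (v n z) = complex_of_real (R n z)"
proof -
  have "cinner J (dn J f n z - v n z) (v n z) = 0"
    by (rule cinner_v_eq_0[OF dn_minus_v_in_span])
  then show ?thesis by (simp add: cinner_self)
qed

lemma twice_differentiable_R:
  "twice_differentiable (v n) \<Longrightarrow> twice_differentiable (\<lambda>z. R n z)"
  unfolding power2_norm_eq_inner by (rule twice_differentiable_bounded_bilinear[OF bounded_bilinear_inner])

lemma twice_differentiable_gs_coeff:
  assumes "twice_differentiable (v k)"
  shows "twice_differentiable (\<lambda>z. gs_coeff n k z)"
proof -
  have "(\<lambda>z. gs_coeff n k z) =
      (\<lambda>z. cinner J (v k z) (dn J f n z) * complex_of_real (inverse (R k z)))"
    by (rule ext) (simp add: gs_coeff_def divide_inverse)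
  moreover have "twice_differentiable (\<lambda>z. complex_of_real (inverse (R k z)))"
    by (intro twice_differentiable_bounded_linear[OF bounded_linear_of_real]
        twice_differentiable_inverse twice_differentiable_R assms R_pos)
  moreover have "twice_differentiable (\<lambda>z. cinner J (v k z) (dn J f n z))"
    by (rule twice_differentiable_bounded_bilinear[OF bounded_bilinear_cinner assms
          twice_differentiable_dn[OF holo]])
  ultimately show ?thesis
    by (simp add: twice_differentiable_bounded_bilinear[OF bounded_bilinear_mult])
qed

lemma twice_differentiable_v: "twice_differentiable (v n)"
proof (induction n rule: less_induct)
  case (less n)
  then have "twice_differentiable (\<lambda>z. dn J f n z - (\<Sum>k<n. cscale J (gs_coeff n k z) (v k z)))"
    by (intro twice_differentiable_diff twice_differentiable_dn[OF holo] twice_differentiable_sum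
        twice_differentiable_bounded_bilinear[OF bounded_bilinear_cscale]
        twice_differentiable_gs_coeff) auto
  then show ?case by (subst v_eq)
qed

lemma differentiable_v: "v n differentiable at z"
  by (rule twice_differentiable_imp_differentiable[OF twice_differentiable_v])

lemma differentiable_dn: "dn J f n differentiable at z"
  by (rule twice_differentiable_imp_differentiable[OF twice_differentiable_dn[OF holo]])

lemma differentiable_gs_coeff: "(\<lambda>z. gs_coeff n k z) differentiable at z"
  by (rule twice_differentiable_imp_differentiable[OF
        twice_differentiable_gs_coeff[OF twice_differentiable_v]])

lemma differentiable_R: "(\<lambda>w. R n w) differentiable at z"
  by (rule twice_differentiable_imp_differentiable[OF
        twice_differentiable_R[OF twice_differentiable_v]])

end

context landau_levels
begin

lemma dH_dn: "dH J (dn J f n) z = dn J f (Suc n) z"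
  by (simp add: dn_Suc)

lemma differentiable_gs_term: "(\<lambda>z. cscale J (gs_coeff n k z) (v k z)) differentiable at z"
  by (rule differentiable_bounded_bilinear[OF bounded_bilinear_cscale differentiable_gs_coeff differentiable_v])

lemma dbarH_v_expand:
  "dbarH J (v n) z = - (\<Sum>k<n. cscale J (dbarC (\<lambda>z. gs_coeff n k z) z) (v k z)
                          + cscale J (gs_coeff n k z) (dbarH J (v k) z))"
proof -
  have "dbarH J (v n) z = dbarH J (dn J f n) z
      - (\<Sum>k<n. dbarH J (\<lambda>z. cscale J (gs_coeff n k z) (v k z)) z)"
    by (subst v_eq) (simp add: dbarH_diff dbarH_sum differentiable_dn differentiable_sum
        differentiable_gs_term)
  then show ?thesis
    by (simp add: dbarH_dn[OF holo] dbarH_cscale[OF differentiable_gs_coeff differentiable_v])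
qed

lemma dH_v_expand:
  "dH J (v n) z = dn J f (Suc n) z - (\<Sum>k<n. cscale J (dC (\<lambda>z. gs_coeff n k z) z) (v k z)
                                       + cscale J (gs_coeff n k z) (dH J (v k) z))"
proof -
  have "dH J (v n) z = dH J (dn J f n) z
      - (\<Sum>k<n. dH J (\<lambda>z. cscale J (gs_coeff n k z) (v k z)) z)"
    by (subst v_eq) (simp add: dH_diff dH_sum differentiable_dn differentiable_sum
        differentiable_gs_term)
  then show ?thesis
    by (simp add: dH_dn dH_cscale[OF differentiable_gs_coeff differentiable_v])
qed

lemma dbarH_v_in_span: "dbarH J (v n) z \<in> S n z"
proof (induction n rule: less_induct)
  case (less n)
  show ?case
    unfolding dbarH_v_expand[of n z]
  proof (intro cspan_upto_minus cspan_upto_sum cspan_upto_add cspan_upto_cscale)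
    fix k assume "k \<in> {..<n}"
    then show "v k z \<in> S n z" "dbarH J (v k) z \<in> S n z"
      using less.IH[of k] by (auto intro: v_in_span cspan_upto_mono[of k n])
  qed simp
qed

lemma dH_v_minus_dn_in_span: "dH J (v n) z - dn J f (Suc n) z \<in> S (Suc n) z"
proof (induction n rule: less_induct)
  case (less n)
  have "dH J (v n) z - dn J f (Suc n) z = - (\<Sum>k<n. cscale J (dC (\<lambda>z. gs_coeff n k z) z) (v k z)
                                       + cscale J (gs_coeff n k z) (dH J (v k) z))"
    unfolding dH_v_expand[of n z] by simp
  also have "\<dots> \<in> S (Suc n) z"
  proof (intro cspan_upto_minus cspan_upto_sum cspan_upto_add cspan_upto_cscale)
    fix k assume k: "k \<in> {..<n}"
    then show "v k z \<in> S (Suc n) z"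
      by (intro v_in_span) simp
    have "dH J (v k) z - dn J f (Suc k) z \<in> S (Suc n) z"
      using less.IH[of k] k by (intro cspan_upto_mono[of "Suc k" "Suc n"]) auto
    moreover have "dn J f (Suc k) z \<in> S (Suc n) z"
      using k by (intro cspan_upto_mem) simp
    ultimately show "dH J (v k) z \<in> S (Suc n) z"
      using cspan_upto_add by force
  qed simp
  finally show ?case .
qed

text \<open>Both follow by differentiating the orthogonality relations < d^j f, v_n > = 0 for j < n.\<close>

lemma cinner_dn_dbarH_v:
  assumes "j < n"
  shows "cinner J (dn J f j z) (dbarH J (v n) z) = - cinner J (dn J f (Suc j) z) (v n z)"
proof -
  have "dbarC (\<lambda>w. cinner J (dn J f j w) (v n w)) z = 0"
    using cinner_dn_v[OF assms] by (simp add: dbarC_def dx_def dy_def)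
  then show ?thesis
    using dbarC_cinner[OF differentiable_dn differentiable_v] by (simp add: dH_dn add_eq_0_iff)
qed

lemma cinner_dn_dH_v:
  assumes "j < n"
  shows "cinner J (dn J f j z) (dH J (v n) z) = 0"
proof -
  have "dC (\<lambda>w. cinner J (dn J f j w) (v n w)) z = 0"
    using cinner_dn_v[OF assms] by simp
  then show ?thesis
    using dC_cinner[OF differentiable_dn differentiable_v] by (simp add: dbarH_dn[OF holo])
qed

definition level_ratio :: "nat \<Rightarrow> complex \<Rightarrow> real" where
  "level_ratio n z = (if n = 0 then 0 else R n z / R (n - 1) z)"

definition beta :: "nat \<Rightarrow> complex \<Rightarrow> complex" where
  "beta n z = cinner J (v n z) (dH J (v n) z) / complex_of_real (R n z)"

lemma dbarH_v_Suc: "dbarH J (v (Suc m)) z = cscale J (- complex_of_real (level_ratio (Suc m) z)) (v m z)"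
proof -
  define c where "c = complex_of_real (R (Suc m) z / R m z)"
  define x where "x = dbarH J (v (Suc m)) z + cscale J c (v m z)"
  have "x \<in> S (Suc m) z"
    unfolding x_def by (intro cspan_upto_add cspan_upto_cscale dbarH_v_in_span v_in_span) simp
  moreover have "cinner J (dn J f j z) x = 0" if j: "j < Suc m" for j
  proof (cases "j < m")
    case True
    then show ?thesis
      unfolding x_def using cinner_dn_dbarH_v[OF j] cinner_dn_v[of "Suc j" "Suc m"] cinner_dn_v[OF True]
      by simp
  next
    case False
    then have "j = m" using j by simp
    have "cinner J (dn J f m z) (dbarH J (v (Suc m)) z) = - complex_of_real (R (Suc m) z)"
      using cinner_dn_dbarH_v[of m "Suc m"] by (simp add: cinner_dn_v_self)
    moreover have "c * cinner J (dn J f m z) (v m z) = complex_of_real (R (Suc m) z)"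
      unfolding c_def cinner_dn_v_self using R_pos[where n=m and z=z] by (simp add: field_simps)
    ultimately show ?thesis unfolding x_def \<open>j = m\<close> by simp
  qed
  ultimately have "x = 0" by (rule cspan_upto_orthogonal_eq_0)
  then show ?thesis
    unfolding x_def c_def level_ratio_def by (simp add: add_eq_0_iff)
qed

lemma dbarH_v: "dbarH J (v n) = (\<lambda>w. cscale J (- complex_of_real (level_ratio n w)) (v (n - 1) w))"
proof
  fix w show "dbarH J (v n) w = cscale J (- complex_of_real (level_ratio n w)) (v (n - 1) w)"
    using dbarH_v_in_span[of 0 w] dbarH_v_Suc
    by (cases n) (simp_all add: cspan_upto_0 level_ratio_def)
qed

lemma dH_v: "dH J (v n) z = v (Suc n) z + cscale J (beta n z) (v n z)"
proof -
  define y where "y = dH J (v n) z - v (Suc n) z - cscale J (beta n z) (v n z)"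
  have "y = (dH J (v n) z - dn J f (Suc n) z) + (dn J f (Suc n) z - v (Suc n) z)
      - cscale J (beta n z) (v n z)"
    unfolding y_def by simp
  also have "\<dots> \<in> S (Suc n) z"
    by (intro cspan_upto_diff cspan_upto_add cspan_upto_cscale dH_v_minus_dn_in_span
        dn_minus_v_in_span v_in_span) simp
  finally have "y \<in> S (Suc n) z" .
  moreover have "cinner J (dn J f j z) y = 0" if j: "j < Suc n" for j
  proof (cases "j < n")
    case True
    then show ?thesis
      unfolding y_def using cinner_dn_dH_v[OF True] cinner_dn_v[OF True] cinner_dn_v[OF j] by simp
  next
    case False
    then have "j = n" using j by simp
    have "cinner J (dn J f n z - v n z) (dH J (v n) z) = 0"
      by (rule cinner_cspan_upto_eq_0[OF cinner_dn_dH_v dn_minus_v_in_span])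
    then have "cinner J (dn J f n z) (dH J (v n) z) = beta n z * complex_of_real (R n z)"
      unfolding beta_def using R_pos[where n=n and z=z] by simp
    then show ?thesis
      unfolding y_def \<open>j = n\<close> using cinner_dn_v[of n "Suc n"] by (simp add: cinner_dn_v_self)
  qed
  ultimately have "y = 0" by (rule cspan_upto_orthogonal_eq_0)
  then show ?thesis unfolding y_def by (simp add: algebra_simps)
qed

end

subsection \<open>The Toda-type identity\<close>

context landau_levels
begin

lemma cinner_dbarH_v_v: "cinner J (dbarH J (v n) z) (v n z) = 0"
  by (rule cinner_v_eq_0[OF dbarH_v_in_span])

lemma cinner_v_dbarH_v: "cinner J (v n z) (dbarH J (v n) z) = 0"
  using cinner_dbarH_v_v by (subst cinner_commute) simp

lemma R_eq_cinner: "(\<lambda>w. complex_of_real (R n w)) = (\<lambda>w. cinner J (v n w) (v n w))"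
  by (rule ext) (simp only: cinner_self)

lemma dC_R: "dC (\<lambda>w. complex_of_real (R n w)) z = cinner J (v n z) (dH J (v n) z)"
  unfolding R_eq_cinner dC_cinner[OF differentiable_v differentiable_v] cinner_dbarH_v_v by simp

lemma dbarC_R: "dbarC (\<lambda>w. complex_of_real (R n w)) z = cinner J (dH J (v n) z) (v n z)"
  unfolding R_eq_cinner dbarC_cinner[OF differentiable_v differentiable_v] cinner_v_dbarH_v by simp

lemma dbarC_ln_R:
  "dbarC (\<lambda>w. complex_of_real (ln (R n w))) =
     (\<lambda>w. complex_of_real (inverse (R n w)) * cinner J (dH J (v n) w) (v n w))"
proof
  fix w
  have "dbarC (\<lambda>w. complex_of_real (ln (R n w))) w =
      complex_of_real (inverse (R n w)) * dbarC (\<lambda>w. complex_of_real (R n w)) w"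
    by (rule dbarC_of_real_compose[OF differentiable_R]) (intro DERIV_ln R_pos)
  then show "dbarC (\<lambda>w. complex_of_real (ln (R n w))) w =
      complex_of_real (inverse (R n w)) * cinner J (dH J (v n) w) (v n w)"
    by (simp only: dbarC_R)
qed

lemma twice_differentiable_level_ratio: "twice_differentiable (\<lambda>z. level_ratio n z)"
proof (cases n)
  case (Suc m)
  have "(\<lambda>z. level_ratio n z) = (\<lambda>z. R n z * inverse (R m z))"
    by (rule ext) (simp add: level_ratio_def Suc divide_inverse)
  then show ?thesis
    by (simp only:) (intro twice_differentiable_bounded_bilinear[OF bounded_bilinear_mult]
        twice_differentiable_inverse twice_differentiable_R twice_differentiable_v R_pos)
qed (simp add: level_ratio_def)

lemma cinner_v_dH_v: "cinner J (v n z) (dH J (v n) z) = beta n z * complex_of_real (R n z)"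
  unfolding beta_def using R_pos[where n=n and z=z] by simp

lemma cinner_dH_v_v: "cinner J (dH J (v n) z) (v n z) = cnj (beta n z) * complex_of_real (R n z)"
  unfolding dH_v[of n z] by (simp add: cinner_v_v cinner_self)

lemma cinner_dH_v_self:
  "cinner J (dH J (v n) z) (dH J (v n) z) =
     complex_of_real (R (Suc n) z) + cnj (beta n z) * beta n z * complex_of_real (R n z)"
  unfolding dH_v[of n z]
  by (simp add: cinner_v_v cinner_v_v[of "Suc n" n] cinner_self[of "v n z"] cinner_self[of "v (Suc n) z"]
      algebra_simps)

text \<open>Since the Wirtinger derivatives commute, dbarH (dH v_n) = dH (- h_n v_(n-1)), and the only
  component of this along v_n comes from dH v_(n-1) = v_n + beta_(n-1) v_(n-1).\<close>

lemma cinner_dbarH_dH_v: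
  "cinner J (dbarH J (dH J (v n)) z) (v n z) = - complex_of_real (level_ratio n z * R n z)"
proof -
  have "(\<lambda>w. - complex_of_real (level_ratio n w)) differentiable at z"
    using twice_differentiable_imp_differentiable[OF twice_differentiable_bounded_linear[OF
          bounded_linear_of_real twice_differentiable_level_ratio]]
    by (intro differentiable_minus)
  then have eq: "dbarH J (dH J (v n)) z =
      cscale J (dC (\<lambda>w. - complex_of_real (level_ratio n w)) z) (v (n - 1) z)
      + cscale J (- complex_of_real (level_ratio n z)) (dH J (v (n - 1)) z)"
    unfolding dH_dbarH_commute[OF twice_differentiable_v, symmetric] dbarH_v
    by (rule dH_cscale[OF _ differentiable_v])
  show ?thesis
  proof (cases n)
    case (Suc m)
    have "cinner J (dH J (v m) z) (v n z) = complex_of_real (R n z)"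
      unfolding dH_v[of m z] Suc by (simp add: cinner_v_v cinner_self)
    then show ?thesis
      unfolding eq using cinner_v_v[of m n z] Suc by (simp add: level_ratio_def)
  next
    case 0
    then show ?thesis
      unfolding eq by (simp add: level_ratio_def)
  qed
qed

lemma dC_dbarC_ln_R:
  "dC (dbarC (\<lambda>w. complex_of_real (ln (R n w)))) z =
     complex_of_real (level_ratio (Suc n) z - level_ratio n z)"
proof -
  have d1: "(\<lambda>w. complex_of_real (inverse (R n w))) differentiable at z"
    by (intro twice_differentiable_imp_differentiable twice_differentiable_bounded_linear[OF
          bounded_linear_of_real] twice_differentiable_inverse twice_differentiable_R
          twice_differentiable_v R_pos)
  have d2: "(\<lambda>w. cinner J (dH J (v n) w) (v n w)) differentiable at z"
    by (rule differentiable_bounded_bilinear[OF bounded_bilinear_cinner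
          differentiable_dH[OF twice_differentiable_v] differentiable_v])
  have i1: "dC (\<lambda>w. complex_of_real (inverse (R n w))) z =
      complex_of_real (- (inverse (R n z) ^ 2)) * dC (\<lambda>w. complex_of_real (R n w)) z"
    using DERIV_inverse[of "R n z" UNIV] R_pos[where n=n and z=z]
    by (intro dC_of_real_compose[OF differentiable_R]) (simp add: numeral_2_eq_2 v_nonzero)
  have i2: "dC (\<lambda>w. cinner J (dH J (v n) w) (v n w)) z =
      cinner J (dbarH J (dH J (v n)) z) (v n z) + cinner J (dH J (v n) z) (dH J (v n) z)"
    by (rule dC_cinner[OF differentiable_dH[OF twice_differentiable_v] differentiable_v])
  have "dC (dbarC (\<lambda>w. complex_of_real (ln (R n w)))) z =
      dC (\<lambda>w. complex_of_real (inverse (R n w))) z * cinner J (dH J (v n) z) (v n z)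
      + complex_of_real (inverse (R n z)) * dC (\<lambda>w. cinner J (dH J (v n) w) (v n w)) z"
    unfolding dbarC_ln_R by (rule dC_mult[OF d1 d2])
  also have "\<dots> = complex_of_real (- (inverse (R n z) ^ 2))
        * (beta n z * complex_of_real (R n z)) * (cnj (beta n z) * complex_of_real (R n z))
      + complex_of_real (inverse (R n z)) * (- complex_of_real (level_ratio n z * R n z)
        + (complex_of_real (R (Suc n) z) + cnj (beta n z) * beta n z * complex_of_real (R n z)))"
    unfolding i1 i2 unfolding dC_R cinner_v_dH_v cinner_dH_v_v cinner_dbarH_dH_v cinner_dH_v_self
    by simp
  also have "\<dots> = complex_of_real (level_ratio (Suc n) z - level_ratio n z)"
    using R_pos[where n=n and z=z] by (simp add: level_ratio_def field_simps power2_eq_square)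
  finally show ?thesis .
qed

lemma un_eq: "un J f k = (\<lambda>z. cscale J (complex_of_real (inverse (norm (v k z)))) (v k z))"
  by (rule ext) (simp only: un_def rn_def cscale_simps(6) divide_inverse mult_1)

lemma differentiable_inverse_norm_v:
  "(\<lambda>w. complex_of_real (inverse (norm (v k w)))) differentiable at z"
proof -
  have "((\<lambda>x. inverse (sqrt x)) has_real_derivative
      - (inverse (sqrt (R k z)) * (inverse (sqrt (R k z)) / 2) * inverse (sqrt (R k z)))) (at (R k z))"
    using R_pos[where n=k and z=z] by (intro DERIV_inverse' DERIV_real_sqrt) auto
  from has_derivative_of_real_compose[OF differentiable_R this]
  show ?thesis by (simp add: differentiableI)
qed

lemma hN_eq_level_ratio: "hN J f n z = level_ratio n z"
proof (cases n)
  case (Suc m)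
  have "dH J (un J f m) z =
      cscale J (dC (\<lambda>w. complex_of_real (inverse (norm (v m w)))) z) (v m z)
      + cscale J (complex_of_real (inverse (norm (v m z)))) (dH J (v m) z)"
    unfolding un_eq by (rule dH_cscale[OF differentiable_inverse_norm_v differentiable_v])
  then have "cinner J (un J f (Suc m) z) (dH J (un J f m) z) =
      complex_of_real (inverse (norm (v (Suc m) z)))
      * (complex_of_real (inverse (norm (v m z))) * complex_of_real (R (Suc m) z))"
    unfolding un_eq dH_v[of m z] by (simp add: cinner_v_v cinner_v_v[of "Suc m" m] cinner_self)
  also have "\<dots> = complex_of_real (norm (v (Suc m) z) / norm (v m z))"
    using v_nonzero[where n="Suc m" and z=z] by (simp add: field_simps power2_eq_square)
  finally show ?thesis
    unfolding hN_def level_ratio_def Suc by (simp add: norm_divide power_divide)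
qed (simp add: hN_def level_ratio_def)

lemma ricci_identity:
  assumes "N \<ge> 1"
  shows "(\<forall>z. hN J f N z > 0) \<and>
         (\<forall>z. has_dx (\<lambda>w. complex_of_real (ln (hN J f N w))) z \<and>
              has_dy (\<lambda>w. complex_of_real (ln (hN J f N w))) z \<and>
              has_dx (dbarC (\<lambda>w. complex_of_real (ln (hN J f N w)))) z \<and>
              has_dy (dbarC (\<lambda>w. complex_of_real (ln (hN J f N w)))) z \<and>
              dC (dbarC (\<lambda>w. complex_of_real (ln (hN J f N w)))) z =
                complex_of_real (hN J f (N - 1) z - 2 * hN J f N z + hN J f (N + 1) z))"
proof -
  obtain m where m: "N = Suc m" using assms by (cases N) auto
  define L where "L n w = complex_of_real (ln (R n w))" for n w
  have L: "twice_differentiable (L n)" for n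
    unfolding L_def by (intro twice_differentiable_bounded_linear[OF bounded_linear_of_real]
        twice_differentiable_ln twice_differentiable_R twice_differentiable_v R_pos)
  have hN_pos: "hN J f N z > 0" for z
    unfolding hN_eq_level_ratio m level_ratio_def using R_pos[where n="Suc m" and z=z] R_pos[where n=m and z=z] by simp
  have log_hN: "(\<lambda>w. complex_of_real (ln (hN J f N w))) = (\<lambda>w. L N w - L m w)"
    unfolding L_def hN_eq_level_ratio m level_ratio_def
    using R_pos[where n="Suc m"] R_pos[where n=m] by (simp add: ln_div)
  have dbarC_log_hN: "dbarC (\<lambda>w. L N w - L m w) = (\<lambda>w. dbarC (L N) w - dbarC (L m) w)"
    by (rule ext) (rule dbarC_diff[OF twice_differentiable_imp_differentiable[OF L]
          twice_differentiable_imp_differentiable[OF L]])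
  have "dC (dbarC (\<lambda>w. L N w - L m w)) z =
      complex_of_real (hN J f (N - 1) z - 2 * hN J f N z + hN J f (N + 1) z)" for z
    unfolding dbarC_log_hN dC_diff[OF differentiable_dbarC[OF L] differentiable_dbarC[OF L]]
    unfolding L_def dC_dbarC_ln_R hN_eq_level_ratio m by simp
  moreover have "(\<lambda>w. dbarC (L N) w - dbarC (L m) w) differentiable at z" for z
    by (intro differentiable_diff differentiable_dbarC L)
  moreover have "(\<lambda>w. L N w - L m w) differentiable at z" for z
    by (intro differentiable_diff twice_differentiable_imp_differentiable L)
  ultimately show ?thesis
    unfolding log_hN using hN_pos
    by (auto intro!: has_dx_differentiable has_dy_differentiable simp: dbarC_log_hN)
qed

end

theorem mainTheorem7:
  fixes J :: "'h::{real_inner, complete_space} \<Rightarrow> 'h"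
    and f :: "complex \<Rightarrow> 'h"
    and \<omega>1 \<omega>2 :: complex and N :: nat
  assumes J: "complex_structure J"
    and separable: "\<exists>C. countable C \<and> closure C = (UNIV :: 'h set)"
    and lat: "\<omega>1 \<noteq> 0" "Im (\<omega>2 / \<omega>1) \<noteq> 0"
    and holo: "holoH J f"
    and indep: "\<And>z n. clin_indep J (\<lambda>k. dn J f k z) n"
    and quasi_periodic: "\<And>l. l \<in> lattice \<omega>1 \<omega>2 \<Longrightarrow>
       \<exists>c V. c holomorphic_on UNIV \<and> (\<forall>z. c z \<noteq> 0) \<and> unitary J V \<and>
             (\<forall>z. f (z + l) = cscale J (c z) (V (f z)))"
    and N: "N \<ge> 1"
  shows "(\<forall>z. hN J f N z > 0) \<and>
         (\<forall>z. has_dx (\<lambda>w. complex_of_real (ln (hN J f N w))) z \<and>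
              has_dy (\<lambda>w. complex_of_real (ln (hN J f N w))) z \<and>
              has_dx (dbarC (\<lambda>w. complex_of_real (ln (hN J f N w)))) z \<and>
              has_dy (dbarC (\<lambda>w. complex_of_real (ln (hN J f N w)))) z \<and>
              dC (dbarC (\<lambda>w. complex_of_real (ln (hN J f N w)))) z =
                complex_of_real (hN J f (N - 1) z - 2 * hN J f N z + hN J f (N + 1) z))"
proof -
  interpret landau_levels J f
    by unfold_locales (use J holo indep in auto)
  show ?thesis
    by (rule ricci_identity[OF N])
qed

end
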